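(* Let $(R,\mathfrak m)$ be a Noetherian local ring and $M$ a finitely generated $R$-module with $\dim M=d\ge 1$. Let $k$ and $\ell$ be two positive integers. Then there exists an integer $n_3>\ell$ such that $$(\mathfrak m^{n_3}M+H^0_{\mathfrak m}(M)):_M\mathfrak m^{k}\subseteq \mathfrak m^{\ell}M+H^0_{\mathfrak m}(M).$$
   Context: For a submodule $N\subseteq M$ and an ideal $J$, $N:_MJ=\{x\in M: Jx\subseteq N\}$. $H^0_{\mathfrak m}(M)$ is the submodule of elements of $M$ annihilated by some power of $\mathfrak m$. *)

theory Defs
  imports "HOL-Algebra.Algebra" "HOL-Library.Extended_Nat"
begin

definition local_ring :: "('a, 'b) ring_scheme \<Rightarrow> 'a set \<Rightarrow> bool" where
  "local_ring R m \<longleftrightarrow> cring R \<and> maximalideal m R \<and> (\<forall>I. maximalideal I R \<longrightarrow> I = m)"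

fun ideal_pow :: "('a, 'b) ring_scheme \<Rightarrow> 'a set \<Rightarrow> nat \<Rightarrow> 'a set" where
  "ideal_pow R I 0 = carrier R"
| "ideal_pow R I (Suc n) = ideal_prod R I (ideal_pow R I n)"

inductive_set ideal_smult :: "('a, 'b) ring_scheme \<Rightarrow> ('a, 'c, 'd) module_scheme \<Rightarrow> 'a set \<Rightarrow> 'c set \<Rightarrow> 'c set"
  for R M I N where
    zero: "\<zero>\<^bsub>M\<^esub> \<in> ideal_smult R M I N"
  | gen: "\<lbrakk> a \<in> I; x \<in> N \<rbrakk> \<Longrightarrow> a \<odot>\<^bsub>M\<^esub> x \<in> ideal_smult R M I N"
  | add: "\<lbrakk> u \<in> ideal_smult R M I N; v \<in> ideal_smult R M I N \<rbrakk> \<Longrightarrow> u \<oplus>\<^bsub>M\<^esub> v \<in> ideal_smult R M I N"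

definition submod_sum :: "('a, 'c, 'd) module_scheme \<Rightarrow> 'c set \<Rightarrow> 'c set \<Rightarrow> 'c set" where
  "submod_sum M A B = {x \<oplus>\<^bsub>M\<^esub> y | x y. x \<in> A \<and> y \<in> B}"

definition submod_colon :: "('a, 'c, 'd) module_scheme \<Rightarrow> 'c set \<Rightarrow> 'a set \<Rightarrow> 'c set" where
  "submod_colon M N J = {x \<in> carrier M. \<forall>a \<in> J. a \<odot>\<^bsub>M\<^esub> x \<in> N}"

definition H0 :: "('a, 'b) ring_scheme \<Rightarrow> ('a, 'c, 'd) module_scheme \<Rightarrow> 'a set \<Rightarrow> 'c set" where
  "H0 R M m = {x \<in> carrier M. \<exists>n. \<forall>a \<in> ideal_pow R m n. a \<odot>\<^bsub>M\<^esub> x = \<zero>\<^bsub>M\<^esub>}"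

definition fin_gen_module :: "('a, 'b) ring_scheme \<Rightarrow> ('a, 'c, 'd) module_scheme \<Rightarrow> bool" where
  "fin_gen_module R M \<longleftrightarrow> (\<exists>S. finite S \<and> S \<subseteq> carrier M \<and>
     carrier M = {finsum M (\<lambda>s. f s \<odot>\<^bsub>M\<^esub> s) S | f. f \<in> S \<rightarrow> carrier R})"

text \<open>Annihilator and Krull dimension dim M = dim R/Ann(M) (supremum of lengths of
  chains of prime ideals containing Ann M).\<close>
definition annihilator :: "('a, 'b) ring_scheme \<Rightarrow> ('a, 'c, 'd) module_scheme \<Rightarrow> 'a set" where
  "annihilator R M = {a \<in> carrier R. \<forall>x \<in> carrier M. a \<odot>\<^bsub>M\<^esub> x = \<zero>\<^bsub>M\<^esub>}"

definition prime_chain_over :: "('a, 'b) ring_scheme \<Rightarrow> 'a set \<Rightarrow> (nat \<Rightarrow> 'a set) \<Rightarrow> nat \<Rightarrow> bool" where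
  "prime_chain_over R A P n \<longleftrightarrow> (\<forall>i \<le> n. primeideal (P i) R \<and> A \<subseteq> P i) \<and> (\<forall>i < n. P i \<subset> P (Suc i))"

definition module_dim :: "('a, 'b) ring_scheme \<Rightarrow> ('a, 'c, 'd) module_scheme \<Rightarrow> enat" where
  "module_dim R M = Sup {enat n | n. \<exists>P. prime_chain_over R (annihilator R M) P n}"

end

theory Submission
  imports Defs
begin

text \<open>
  Write H = H^0_m(M) and let b_1, ..., b_r generate m^k. The map x \<mapsto> (b_i x)_i from M to M^r
  sends an x with m^k x \<subseteq> m^n M + H into (m^n M^r + H^r) \<inter> N, where N is the image of M
  plus H^r. An Artin-Rees lemma modulo H^r puts this intersection into m^l N + H^r for large n,
  so (b_i x)_i agrees modulo H^r with (b_i y)_i for some y \<in> m^l M: that is, m^k (x - y) \<subseteq> H.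
  As H is finitely generated, a power of m kills it, and so x - y \<in> H.

  The Artin-Rees lemma modulo a submodule B, (I^n M + B) \<inter> N \<subseteq> I^l N + B for n large, is
  proved by induction on the number of generators of I; adjoining a generator a uses the
  stabilisation of the chain of colon submodules (N + B) : a^j in the Noetherian module M.
\<close>

no_notation Sum_Type.Plus (infixr \<open><+>\<close> 65)

section \<open>Ideals and their powers\<close>

lemma (in cring) idealI':
  assumes "I \<subseteq> carrier R" "\<zero> \<in> I" "\<And>x y. x \<in> I \<Longrightarrow> y \<in> I \<Longrightarrow> x \<oplus> y \<in> I"
    "\<And>r x. r \<in> carrier R \<Longrightarrow> x \<in> I \<Longrightarrow> r \<otimes> x \<in> I"
  shows "ideal I R"
proof (rule idealI[OF ring_axioms])
  show "subgroup I (add_monoid R)"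
  proof
    fix x assume "x \<in> I"
    then have "inv\<^bsub>add_monoid R\<^esub> x = (\<ominus> \<one>) \<otimes> x"
      using assms(1) by (auto simp: a_inv_def[symmetric] l_minus)
    then show "inv\<^bsub>add_monoid R\<^esub> x \<in> I" using assms(4) \<open>x \<in> I\<close> by simp
  qed (use assms in auto)
next
  fix a x assume "a \<in> I" "x \<in> carrier R"
  then show "x \<otimes> a \<in> I" "a \<otimes> x \<in> I"
    using assms(1,4) m_comm[of a x] by auto
qed

lemma (in ring) ideal_pow_ideal: "ideal I R \<Longrightarrow> ideal (ideal_pow R I n) R"
  by (induction n) (auto intro: oneideal ideal_prod_is_ideal)

lemma (in ring) ideal_pow_subset_carrier: "ideal I R \<Longrightarrow> ideal_pow R I n \<subseteq> carrier R"
  using ideal.Icarr[OF ideal_pow_ideal] by blast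

lemma (in ring) ideal_pow_antimono:
  assumes "ideal I R" "n \<le> n'" shows "ideal_pow R I n' \<subseteq> ideal_pow R I n"
  using assms(2)
proof (induction n' rule: dec_induct)
  case (step k)
  then show ?case using ideal_prod_inter[OF assms(1) ideal_pow_ideal[OF assms(1)]] by auto
qed simp

lemma (in ring) ideal_prod_mono:
  assumes "I \<subseteq> I'" "K \<subseteq> K'" shows "ideal_prod R I K \<subseteq> ideal_prod R I' K'"
proof
  fix x assume "x \<in> ideal_prod R I K"
  then show "x \<in> ideal_prod R I' K'"
    by induction (use assms in \<open>auto intro: ideal_prod.prod ideal_prod.sum\<close>)
qed

lemma (in ring) ideal_pow_mono: "I \<subseteq> I' \<Longrightarrow> ideal_pow R I n \<subseteq> ideal_pow R I' n"
  by (induction n) (auto intro: ideal_prod_mono[THEN subsetD])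

lemma (in cring) ideal_pow_add:
  assumes "ideal I R"
  shows "ideal_pow R I (p + q) = ideal_prod R (ideal_pow R I p) (ideal_pow R I q)"
proof (induction p)
  case 0
  then show ?case
    using ideal_prod_one[OF ideal_pow_ideal[OF assms]] ideal_prod_commute[OF oneideal ideal_pow_ideal[OF assms]]
    by simp
next
  case (Suc p)
  then show ?case
    using ideal_prod_assoc[OF assms ideal_pow_ideal[OF assms] ideal_pow_ideal[OF assms], of p q] by simp
qed

lemma (in ring) nat_pow_in_ideal_pow:
  assumes "a \<in> I" "I \<subseteq> carrier R" shows "a [^] n \<in> ideal_pow R I n"
proof (induction n)
  case (Suc n)
  then have "a \<otimes> a [^] n \<in> ideal_pow R I (Suc n)" using assms by (auto intro: ideal_prod.prod)
  then show ?case using assms nat_pow_Suc2[of a n] by auto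
qed simp

lemma (in ring) set_add_upper:
  assumes "ideal I R" "ideal K R" shows "I \<subseteq> I <+> K" "K \<subseteq> I <+> K"
  using genideal_self[of "I \<union> K"] union_genideal[OF assms] assms
  by (auto dest: ideal.Icarr)

lemma (in ring) set_add_least:
  assumes "ideal K R" "A \<subseteq> K" "B \<subseteq> K" shows "A <+> B \<subseteq> K"
  using assms additive_subgroup.a_closed[OF ideal.axioms(1)[OF assms(1)]]
  by (auto simp: set_add_def')

lemma set_add_mono: "A \<subseteq> A' \<Longrightarrow> B \<subseteq> B' \<Longrightarrow> A <+>\<^bsub>G\<^esub> B \<subseteq> A' <+>\<^bsub>G\<^esub> B'"
  by (auto simp: set_add_def')

lemma (in cring) cgenideal_one: "PIdl \<one> = carrier R"
  by (simp add: cgenideal_eq_genideal genideal_one)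

lemma (in cring) cgenideal_prod_subset:
  assumes "a \<in> carrier R" "b \<in> carrier R"
  shows "ideal_prod R (PIdl a) (PIdl b) \<subseteq> PIdl (a \<otimes> b)"
  using assms cgenideal_prod[OF assms] ideal_prod_eq_genideal[OF cgenideal_ideal cgenideal_ideal]
  by (simp add: genideal_minimal cgenideal_ideal)

lemma (in cring) Idl_insert:
  assumes "S \<subseteq> carrier R" "a \<in> carrier R"
  shows "Idl (insert a S) = Idl S <+> PIdl a"
proof -
  have ideals: "ideal (Idl S) R" "ideal (PIdl a) R"
    using assms by (auto intro: genideal_ideal cgenideal_ideal)
  have "insert a S \<subseteq> Idl S \<union> PIdl a"
    using assms genideal_self cgenideal_self by blast
  moreover have "Idl S \<union> PIdl a \<subseteq> Idl (insert a S)"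
    using assms subset_Idl_subset[of "insert a S" S]
      cgenideal_minimal[of "Idl (insert a S)" a] genideal_ideal[of "insert a S"]
      genideal_self[of "insert a S"] by auto
  ultimately have "Idl (insert a S) = Idl (Idl S \<union> PIdl a)"
    using assms ideals
    by (intro equalityI subset_Idl_subset genideal_minimal genideal_ideal)
       (auto dest: ideal.Icarr)
  then show ?thesis using union_genideal[OF ideals] by simp
qed

lemma (in cring) ideal_prod_add_principal_subset:
  assumes J: "ideal J R" and a: "a \<in> carrier R" and Q: "ideal Q R"
    and Q1: "Q \<subseteq> ideal_pow R J p <+> PIdl (a [^] Suc q)"
    and Q2: "Q \<subseteq> ideal_pow R J (Suc p) <+> PIdl (a [^] q)"
  shows "ideal_prod R (J <+> PIdl a) Q \<subseteq> ideal_pow R J (Suc p) <+> PIdl (a [^] Suc q)"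
    (is "_ \<subseteq> ?K")
proof -
  have Jp: "ideal (ideal_pow R J p) R" "ideal (ideal_pow R J (Suc p)) R"
    by (rule ideal_pow_ideal[OF J])+
  have P: "ideal (PIdl a) R" "ideal (PIdl (a [^] q)) R" "ideal (PIdl (a [^] Suc q)) R"
    using a by (auto intro: cgenideal_ideal)
  have "ideal_prod R J Q \<subseteq> ideal_prod R J (ideal_pow R J p <+> PIdl (a [^] Suc q))"
    using Q1 by (rule ideal_prod_mono[OF order_refl])
  also have "\<dots> = ideal_pow R J (Suc p) <+> ideal_prod R J (PIdl (a [^] Suc q))"
    using J Jp P by (simp add: ideal_prod_distr)
  also have "\<dots> \<subseteq> ?K"
    using ideal_prod_inter[OF J P(3)] by (intro set_add_mono) auto
  finally have JQ: "ideal_prod R J Q \<subseteq> ?K" .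
  have "ideal_prod R (PIdl a) Q \<subseteq> ideal_prod R (PIdl a) (ideal_pow R J (Suc p) <+> PIdl (a [^] q))"
    using Q2 by (rule ideal_prod_mono[OF order_refl])
  also have "\<dots> = ideal_prod R (PIdl a) (ideal_pow R J (Suc p)) <+> ideal_prod R (PIdl a) (PIdl (a [^] q))"
    using Jp P by (simp add: ideal_prod_distr)
  also have "\<dots> \<subseteq> ?K"
  proof (rule set_add_mono)
    show "ideal_prod R (PIdl a) (ideal_pow R J (Suc p)) \<subseteq> ideal_pow R J (Suc p)"
      using ideal_prod_inter[OF P(1) Jp(2)] by blast
    show "ideal_prod R (PIdl a) (PIdl (a [^] q)) \<subseteq> PIdl (a [^] Suc q)"
      using cgenideal_prod_subset[of a "a [^] q"] a nat_pow_Suc2[of a q] by simp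
  qed
  finally have AQ: "ideal_prod R (PIdl a) Q \<subseteq> ?K" .
  have "ideal_prod R (J <+> PIdl a) Q = ideal_prod R J Q <+> ideal_prod R (PIdl a) Q"
    using J P Q by (simp add: ideal_prod_distr)
  also have "\<dots> \<subseteq> ?K" using Jp(2) P(3) JQ AQ by (intro set_add_least add_ideals)
  finally show ?thesis .
qed

lemma (in cring) ideal_pow_add_principal:
  assumes J: "ideal J R" and a: "a \<in> carrier R"
  shows "ideal_pow R (J <+> PIdl a) (p + q) \<subseteq> ideal_pow R J p <+> PIdl (a [^] q)"
proof (induction "p + q" arbitrary: p q)
  case 0
  then show ?case
    using set_add_upper(1)[OF oneideal cgenideal_ideal[of \<one>]] by simp
next
  case (Suc n)
  have I: "ideal (J <+> PIdl a) R" using J a by (intro add_ideals cgenideal_ideal)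
  have "ideal_pow R (J <+> PIdl a) (p + q) \<subseteq> carrier R"
    using I by (rule ideal_pow_subset_carrier)
  moreover have "carrier R \<subseteq> ideal_pow R J p <+> PIdl (a [^] q)" if "p = 0 \<or> q = 0"
  proof -
    have "ideal_pow R J p = carrier R \<or> PIdl (a [^] q) = carrier R"
      using that by (auto simp: cgenideal_one)
    then show ?thesis
      using set_add_upper[OF ideal_pow_ideal[OF J, of p] cgenideal_ideal[OF nat_pow_closed[OF a, of q]]]
      by auto
  qed
  moreover have "ideal_pow R (J <+> PIdl a) (p + q) \<subseteq> ideal_pow R J p <+> PIdl (a [^] q)"
    if p': "p = Suc p'" and q': "q = Suc q'" for p' q'
  proof -
    have n: "n = p' + Suc q'" "n = Suc p' + q'" using Suc(2) p' q' by simp_all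
    have "ideal_pow R (J <+> PIdl a) n \<subseteq> ideal_pow R J p' <+> PIdl (a [^] Suc q')"
      using Suc(1)[OF n(1)] by (simp only: n(1))
    moreover have "ideal_pow R (J <+> PIdl a) n \<subseteq> ideal_pow R J (Suc p') <+> PIdl (a [^] q')"
      using Suc(1)[OF n(2)] by (simp only: n(2))
    ultimately have "ideal_prod R (J <+> PIdl a) (ideal_pow R (J <+> PIdl a) n)
        \<subseteq> ideal_pow R J (Suc p') <+> PIdl (a [^] Suc q')"
      by (rule ideal_prod_add_principal_subset[OF J a ideal_pow_ideal[OF I]])
    moreover have "p + q = Suc n" using Suc(2) by simp
    ultimately show ?thesis using p' q' by simp
  qed
  ultimately show ?case by (cases p; cases q) auto
qed

section \<open>Submodules, their sums and colons\<close>

context module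
begin

lemma submoduleI':
  assumes "N \<subseteq> carrier M" "\<zero>\<^bsub>M\<^esub> \<in> N" "\<And>x y. x \<in> N \<Longrightarrow> y \<in> N \<Longrightarrow> x \<oplus>\<^bsub>M\<^esub> y \<in> N"
    "\<And>a x. a \<in> carrier R \<Longrightarrow> x \<in> N \<Longrightarrow> a \<odot>\<^bsub>M\<^esub> x \<in> N"
  shows "submodule N R M"
proof (rule submoduleI)
  fix x assume "x \<in> N"
  then have "\<ominus>\<^bsub>M\<^esub> x = (\<ominus> \<one>) \<odot>\<^bsub>M\<^esub> x" using assms(1) smult_l_minus[of \<one> x] by auto
  then show "\<ominus>\<^bsub>M\<^esub> x \<in> N" using assms(4) \<open>x \<in> N\<close> by simp
qed (use assms in auto)

lemma submodule_subset: "submodule N R M \<Longrightarrow> N \<subseteq> carrier M"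
  by (rule submoduleE(1))

lemma submodule_zero: "submodule N R M \<Longrightarrow> \<zero>\<^bsub>M\<^esub> \<in> N"
  using subgroup.one_closed[OF submodule.axioms(1)] by fastforce

lemma submodule_add: "submodule N R M \<Longrightarrow> x \<in> N \<Longrightarrow> y \<in> N \<Longrightarrow> x \<oplus>\<^bsub>M\<^esub> y \<in> N"
  by (rule submoduleE(5))

lemma submodule_diff: "submodule N R M \<Longrightarrow> x \<in> N \<Longrightarrow> y \<in> N \<Longrightarrow> x \<ominus>\<^bsub>M\<^esub> y \<in> N"
  unfolding a_minus_def using submoduleE(3,5) by blast

lemma zero_submodule: "submodule {\<zero>\<^bsub>M\<^esub>} R M"
  by (rule submoduleI') auto

lemma submodule_Int: "submodule N R M \<Longrightarrow> submodule N' R M \<Longrightarrow> submodule (N \<inter> N') R M"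
  by (rule submoduleI')
     (auto dest: submodule_subset intro: submodule_zero submodule_add submodule.smult_closed)

lemma submodule_UN_incseq:
  assumes "\<And>j. submodule (N j) R M" "incseq N" shows "submodule (\<Union>j. N j) R M"
proof (rule submoduleI')
  fix x y assume "x \<in> (\<Union>j. N j)" "y \<in> (\<Union>j. N j)"
  then obtain i j where "x \<in> N i" "y \<in> N j" by blast
  then have "x \<in> N (max i j)" "y \<in> N (max i j)"
    using incseqD[OF assms(2), of i "max i j"] incseqD[OF assms(2), of j "max i j"] by auto
  then show "x \<oplus>\<^bsub>M\<^esub> y \<in> (\<Union>j. N j)" using submodule_add[OF assms(1)] by blast
next
  show "(\<Union>j. N j) \<subseteq> carrier M" using submodule_subset[OF assms(1)] by blast
  show "\<zero>\<^bsub>M\<^esub> \<in> (\<Union>j. N j)" using submodule_zero[OF assms(1)] by blast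
  show "\<And>a x. a \<in> carrier R \<Longrightarrow> x \<in> (\<Union>j. N j) \<Longrightarrow> a \<odot>\<^bsub>M\<^esub> x \<in> (\<Union>j. N j)"
    using submodule.smult_closed[OF assms(1)] by blast
qed

lemma smult_image_submodule:
  assumes "b \<in> carrier R" shows "submodule ((\<lambda>x. b \<odot>\<^bsub>M\<^esub> x) ` carrier M) R M"
proof (rule submoduleI')
  show "\<zero>\<^bsub>M\<^esub> \<in> (\<lambda>x. b \<odot>\<^bsub>M\<^esub> x) ` carrier M"
    using assms smult_r_null[of b] by (metis M.zero_closed image_eqI)
  fix x y assume "x \<in> (\<lambda>x. b \<odot>\<^bsub>M\<^esub> x) ` carrier M" "y \<in> (\<lambda>x. b \<odot>\<^bsub>M\<^esub> x) ` carrier M"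
  then show "x \<oplus>\<^bsub>M\<^esub> y \<in> (\<lambda>x. b \<odot>\<^bsub>M\<^esub> x) ` carrier M"
    using assms by (auto simp: smult_r_distr[symmetric])
next
  fix r x assume r: "r \<in> carrier R" and "x \<in> (\<lambda>x. b \<odot>\<^bsub>M\<^esub> x) ` carrier M"
  then obtain y where y: "y \<in> carrier M" "x = b \<odot>\<^bsub>M\<^esub> y" by blast
  then have "r \<odot>\<^bsub>M\<^esub> x = b \<odot>\<^bsub>M\<^esub> (r \<odot>\<^bsub>M\<^esub> y)"
    using assms r by (simp add: smult_assoc1[symmetric] R.m_comm)
  then show "r \<odot>\<^bsub>M\<^esub> x \<in> (\<lambda>x. b \<odot>\<^bsub>M\<^esub> x) ` carrier M" using r y by simp
qed (use assms in auto)

lemma submod_sumI: "x \<in> A \<Longrightarrow> y \<in> B \<Longrightarrow> x \<oplus>\<^bsub>M\<^esub> y \<in> submod_sum M A B"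
  unfolding submod_sum_def by blast

lemma submod_sumE:
  "z \<in> submod_sum M A B \<Longrightarrow> (\<And>x y. x \<in> A \<Longrightarrow> y \<in> B \<Longrightarrow> z = x \<oplus>\<^bsub>M\<^esub> y \<Longrightarrow> P) \<Longrightarrow> P"
  unfolding submod_sum_def by blast

lemma submod_sum_mono: "A \<subseteq> A' \<Longrightarrow> B \<subseteq> B' \<Longrightarrow> submod_sum M A B \<subseteq> submod_sum M A' B'"
  unfolding submod_sum_def by blast

lemma submod_sum_upper:
  assumes "submodule A R M" "submodule B R M"
  shows "A \<subseteq> submod_sum M A B" "B \<subseteq> submod_sum M A B"
  using submod_sumI[of _ A "\<zero>\<^bsub>M\<^esub>" B] submod_sumI[of "\<zero>\<^bsub>M\<^esub>" A _ B]
    submodule_zero[OF assms(1)] submodule_zero[OF assms(2)]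
    submodule_subset[OF assms(1)] submodule_subset[OF assms(2)] by force+

lemma submod_sum_least:
  assumes "submodule N R M" "A \<subseteq> N" "B \<subseteq> N" shows "submod_sum M A B \<subseteq> N"
  using assms submodule_add unfolding submod_sum_def by blast

lemma submodule_submod_sum:
  assumes A: "submodule A R M" and B: "submodule B R M" shows "submodule (submod_sum M A B) R M"
proof (rule submoduleI')
  note c = submodule_subset[OF A] submodule_subset[OF B]
  show "submod_sum M A B \<subseteq> carrier M" unfolding submod_sum_def using c by auto
  show "\<zero>\<^bsub>M\<^esub> \<in> submod_sum M A B"
    using submod_sumI[OF submodule_zero[OF A] submodule_zero[OF B]] by simp
next
  note c = submodule_subset[OF A] submodule_subset[OF B]
  fix x y assume "x \<in> submod_sum M A B" "y \<in> submod_sum M A B"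
  then obtain x1 x2 y1 y2 where xy: "x1 \<in> A" "x2 \<in> B" "y1 \<in> A" "y2 \<in> B"
    "x = x1 \<oplus>\<^bsub>M\<^esub> x2" "y = y1 \<oplus>\<^bsub>M\<^esub> y2" by (auto elim!: submod_sumE)
  then have "x \<oplus>\<^bsub>M\<^esub> y = (x1 \<oplus>\<^bsub>M\<^esub> y1) \<oplus>\<^bsub>M\<^esub> (x2 \<oplus>\<^bsub>M\<^esub> y2)"
    using c by (simp add: M.a_ac subsetD)
  then show "x \<oplus>\<^bsub>M\<^esub> y \<in> submod_sum M A B"
    using xy submodule_add[OF A] submodule_add[OF B] submod_sumI by metis
next
  note c = submodule_subset[OF A] submodule_subset[OF B]
  fix a x assume a: "a \<in> carrier R" and "x \<in> submod_sum M A B"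
  then obtain x1 x2 where "x1 \<in> A" "x2 \<in> B" "x = x1 \<oplus>\<^bsub>M\<^esub> x2" by (auto elim: submod_sumE)
  then show "a \<odot>\<^bsub>M\<^esub> x \<in> submod_sum M A B"
    using a c submodule.smult_closed[OF A] submodule.smult_closed[OF B]
    by (auto simp: smult_r_distr subsetD intro: submod_sumI)
qed

lemma submodule_add_cancel:
  assumes "submodule N R M" "x \<in> N" "y \<in> carrier M" "x \<oplus>\<^bsub>M\<^esub> y \<in> N" shows "y \<in> N"
proof -
  have "x \<in> carrier M" using assms(1,2) submodule_subset by blast
  then have "y = \<ominus>\<^bsub>M\<^esub> x \<oplus>\<^bsub>M\<^esub> (x \<oplus>\<^bsub>M\<^esub> y)"
    using assms(3) by (simp add: M.a_assoc[symmetric] M.l_neg)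
  then show ?thesis using assms submoduleE(3,5) by metis
qed

lemma submod_sum_add_cancel:
  assumes "submodule P R M" "e \<in> P" "t \<in> carrier M" "t \<oplus>\<^bsub>M\<^esub> e \<in> N" shows "t \<in> submod_sum M N P"
proof -
  have "e \<in> carrier M" using assms(1,2) submodule_subset by blast
  then have "t = (t \<oplus>\<^bsub>M\<^esub> e) \<oplus>\<^bsub>M\<^esub> \<ominus>\<^bsub>M\<^esub> e"
    using assms(3) by (simp add: M.a_assoc M.r_neg)
  then show ?thesis using assms submoduleE(3) submod_sumI by metis
qed

lemma submodule_submod_colon:
  assumes "submodule N R M" "J \<subseteq> carrier R" shows "submodule (submod_colon M N J) R M"
proof (rule submoduleI')
  fix r x assume "r \<in> carrier R" "x \<in> submod_colon M N J"
  moreover have "a \<odot>\<^bsub>M\<^esub> (r \<odot>\<^bsub>M\<^esub> x) = r \<odot>\<^bsub>M\<^esub> (a \<odot>\<^bsub>M\<^esub> x)" if "a \<in> J" "x \<in> carrier M" for a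
    using that assms(2) \<open>r \<in> carrier R\<close> by (simp add: smult_assoc1[symmetric] R.m_comm subsetD)
  ultimately show "r \<odot>\<^bsub>M\<^esub> x \<in> submod_colon M N J"
    using submodule.smult_closed[OF assms(1)] unfolding submod_colon_def by auto
qed (use assms in \<open>auto simp: submod_colon_def smult_r_distr subsetD
                   intro: submodule_zero submodule_add\<close>)

lemma submod_colon_mono: "N \<subseteq> N' \<Longrightarrow> J' \<subseteq> J \<Longrightarrow> submod_colon M N J \<subseteq> submod_colon M N' J'"
  unfolding submod_colon_def by blast

lemma submod_colon_genideal:
  assumes N: "submodule N R M" and S: "S \<subseteq> carrier R"
  shows "submod_colon M N (Idl S) = submod_colon M N S"
proof
  show "submod_colon M N (Idl S) \<subseteq> submod_colon M N S"
    using R.genideal_self[OF S] unfolding submod_colon_def by blast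
  show "submod_colon M N S \<subseteq> submod_colon M N (Idl S)"
  proof
    fix x assume x: "x \<in> submod_colon M N S"
    have "ideal {a \<in> carrier R. a \<odot>\<^bsub>M\<^esub> x \<in> N} R"
    proof (rule R.idealI')
      fix a b assume "a \<in> {a \<in> carrier R. a \<odot>\<^bsub>M\<^esub> x \<in> N}" "b \<in> {a \<in> carrier R. a \<odot>\<^bsub>M\<^esub> x \<in> N}"
      then show "a \<oplus> b \<in> {a \<in> carrier R. a \<odot>\<^bsub>M\<^esub> x \<in> N}"
        using x submodule_add[OF N] unfolding submod_colon_def by (simp add: smult_l_distr)
    next
      fix r a assume "r \<in> carrier R" "a \<in> {a \<in> carrier R. a \<odot>\<^bsub>M\<^esub> x \<in> N}"
      then show "r \<otimes> a \<in> {a \<in> carrier R. a \<odot>\<^bsub>M\<^esub> x \<in> N}"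
        using x submodule.smult_closed[OF N] unfolding submod_colon_def by (simp add: smult_assoc1)
    qed (use x submodule_zero[OF N] in \<open>auto simp: submod_colon_def\<close>)
    then have "Idl S \<subseteq> {a \<in> carrier R. a \<odot>\<^bsub>M\<^esub> x \<in> N}"
      using x S unfolding submod_colon_def by (intro R.genideal_minimal) auto
    then show "x \<in> submod_colon M N (Idl S)" using x unfolding submod_colon_def by blast
  qed
qed

lemma submod_colon_colon:
  assumes N: "submodule N R M" and I: "ideal I R" and K: "ideal K R"
  shows "submod_colon M (submod_colon M N K) I \<subseteq> submod_colon M N (ideal_prod R I K)"
proof
  fix x assume x: "x \<in> submod_colon M (submod_colon M N K) I"
  have "c \<odot>\<^bsub>M\<^esub> x \<in> N" if "c \<in> ideal_prod R I K" for c
    using that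
  proof induction
    case (prod i j)
    then have "(i \<otimes> j) \<odot>\<^bsub>M\<^esub> x = j \<odot>\<^bsub>M\<^esub> (i \<odot>\<^bsub>M\<^esub> x)"
      using x ideal.Icarr[OF I] ideal.Icarr[OF K]
      by (simp add: submod_colon_def R.m_comm[of i j] smult_assoc1)
    then show ?case using prod x unfolding submod_colon_def by simp
  next
    case (sum c1 c2)
    then show ?case
      using x R.ideal_prod_in_carrier[OF I K] submodule_add[OF N]
      by (simp add: submod_colon_def smult_l_distr subsetD)
  qed
  then show "x \<in> submod_colon M N (ideal_prod R I K)" using x unfolding submod_colon_def by blast
qed

lemma ideal_smult_subset_carrier:
  assumes "I \<subseteq> carrier R" "Q \<subseteq> carrier M" shows "ideal_smult R M I Q \<subseteq> carrier M"
proof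
  fix x assume "x \<in> ideal_smult R M I Q"
  then show "x \<in> carrier M" by induction (use assms in auto)
qed

lemma ideal_smult_least:
  assumes "submodule N R M" "\<And>a x. a \<in> I \<Longrightarrow> x \<in> Q \<Longrightarrow> a \<odot>\<^bsub>M\<^esub> x \<in> N"
  shows "ideal_smult R M I Q \<subseteq> N"
proof
  fix x assume "x \<in> ideal_smult R M I Q"
  then show "x \<in> N" by induction (use assms submodule_zero submodule_add in auto)
qed

lemma ideal_smult_submodule:
  assumes I: "ideal I R" and Q: "Q \<subseteq> carrier M" shows "submodule (ideal_smult R M I Q) R M"
proof (rule submoduleI')
  have Ic: "I \<subseteq> carrier R" using ideal.Icarr[OF I] by blast
  show "ideal_smult R M I Q \<subseteq> carrier M" using Ic Q by (rule ideal_smult_subset_carrier)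
  fix r x assume r: "r \<in> carrier R" and x: "x \<in> ideal_smult R M I Q"
  from x show "r \<odot>\<^bsub>M\<^esub> x \<in> ideal_smult R M I Q"
  proof induction
    case (gen a y)
    then have "r \<odot>\<^bsub>M\<^esub> (a \<odot>\<^bsub>M\<^esub> y) = (r \<otimes> a) \<odot>\<^bsub>M\<^esub> y"
      using Ic Q r by (simp add: smult_assoc1 subsetD)
    then show ?case using ideal.I_l_closed[OF I gen(1) r] gen(2) by (simp add: ideal_smult.gen)
  next
    case (add u v)
    then have "r \<odot>\<^bsub>M\<^esub> (u \<oplus>\<^bsub>M\<^esub> v) = r \<odot>\<^bsub>M\<^esub> u \<oplus>\<^bsub>M\<^esub> r \<odot>\<^bsub>M\<^esub> v"
      using ideal_smult_subset_carrier[OF Ic Q] r by (simp add: smult_r_distr subsetD)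
    then show ?case using add ideal_smult.add by metis
  qed (simp add: r ideal_smult.zero)
qed (auto intro: ideal_smult.zero ideal_smult.add)

lemma ideal_smult_mono:
  assumes "I \<subseteq> I'" "Q \<subseteq> Q'" shows "ideal_smult R M I Q \<subseteq> ideal_smult R M I' Q'"
proof
  fix x assume "x \<in> ideal_smult R M I Q"
  then show "x \<in> ideal_smult R M I' Q'"
    by induction (use assms in \<open>auto intro: ideal_smult.intros\<close>)
qed

lemma ideal_smult_subset:
  assumes "submodule N R M" "I \<subseteq> carrier R" shows "ideal_smult R M I N \<subseteq> N"
  using assms by (intro ideal_smult_least) (auto intro: submodule.smult_closed)

lemma ideal_smult_carrier:
  assumes "submodule N R M" shows "ideal_smult R M (carrier R) N = N"
proof
  show "N \<subseteq> ideal_smult R M (carrier R) N"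
  proof
    fix x assume "x \<in> N"
    then have "\<one> \<odot>\<^bsub>M\<^esub> x \<in> ideal_smult R M (carrier R) N" by (simp add: ideal_smult.gen)
    then show "x \<in> ideal_smult R M (carrier R) N"
      using \<open>x \<in> N\<close> submodule_subset[OF assms] by (simp add: subsetD)
  qed
qed (use assms in \<open>simp add: ideal_smult_subset\<close>)

lemma ideal_smult_set_add:
  assumes I: "ideal I R" and K: "ideal K R" and Q: "Q \<subseteq> carrier M"
  shows "ideal_smult R M (I <+> K) Q \<subseteq> submod_sum M (ideal_smult R M I Q) (ideal_smult R M K Q)"
proof (rule ideal_smult_least)
  show "submodule (submod_sum M (ideal_smult R M I Q) (ideal_smult R M K Q)) R M"
    using I K Q by (intro submodule_submod_sum ideal_smult_submodule)
  fix a x assume "a \<in> I <+> K" "x \<in> Q"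
  then obtain i k where "i \<in> I" "k \<in> K" "a = i \<oplus> k" "x \<in> Q" by (auto simp: set_add_def')
  then show "a \<odot>\<^bsub>M\<^esub> x \<in> submod_sum M (ideal_smult R M I Q) (ideal_smult R M K Q)"
    using Q ideal.Icarr[OF I] ideal.Icarr[OF K]
    by (auto simp: smult_l_distr subsetD intro: submod_sumI ideal_smult.gen)
qed

lemma ideal_smult_cgenideal:
  assumes "b \<in> carrier R" shows "ideal_smult R M (PIdl b) (carrier M) \<subseteq> (\<lambda>x. b \<odot>\<^bsub>M\<^esub> x) ` carrier M"
proof (rule ideal_smult_least[OF smult_image_submodule[OF assms]])
  fix a x assume "a \<in> PIdl b" "x \<in> carrier M"
  then obtain r where "r \<in> carrier R" "a = r \<otimes> b" "x \<in> carrier M" by (auto simp: cgenideal_def)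
  then show "a \<odot>\<^bsub>M\<^esub> x \<in> (\<lambda>x. b \<odot>\<^bsub>M\<^esub> x) ` carrier M"
    using assms by (auto simp: R.m_comm smult_assoc1)
qed

lemma ideal_smult_submod_sum:
  assumes I: "ideal I R" and A: "submodule A R M" and B: "submodule B R M"
  shows "ideal_smult R M I (submod_sum M A B) \<subseteq> submod_sum M (ideal_smult R M I A) (ideal_smult R M I B)"
proof (rule ideal_smult_least)
  show "submodule (submod_sum M (ideal_smult R M I A) (ideal_smult R M I B)) R M"
    using I A B by (intro submodule_submod_sum ideal_smult_submodule submodule_subset)
  fix a z assume a: "a \<in> I" and "z \<in> submod_sum M A B"
  then obtain x y where "x \<in> A" "y \<in> B" "z = x \<oplus>\<^bsub>M\<^esub> y" by (auto elim: submod_sumE)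
  then show "a \<odot>\<^bsub>M\<^esub> z \<in> submod_sum M (ideal_smult R M I A) (ideal_smult R M I B)"
    using a ideal.Icarr[OF I] submodule_subset[OF A] submodule_subset[OF B]
    by (auto simp: smult_r_distr subsetD intro: submod_sumI ideal_smult.gen)
qed

section \<open>Finitely generated modules over a Noetherian ring\<close>

abbreviation span :: "'c set \<Rightarrow> 'c set" where
  "span S \<equiv> ideal_smult R M (carrier R) S"

lemma span_submodule: "S \<subseteq> carrier M \<Longrightarrow> submodule (span S) R M"
  by (rule ideal_smult_submodule[OF oneideal])

lemma span_mono: "S \<subseteq> T \<Longrightarrow> span S \<subseteq> span T"
  by (rule ideal_smult_mono) auto

lemma span_least: "submodule N R M \<Longrightarrow> S \<subseteq> N \<Longrightarrow> span S \<subseteq> N"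
  using span_mono[of S N] ideal_smult_carrier[of N] by auto

lemma span_base: assumes "s \<in> S" "S \<subseteq> carrier M" shows "s \<in> span S"
  using ideal_smult.gen[of \<one> "carrier R" s S M R] assms by auto

lemma span_empty: "span {} = {\<zero>\<^bsub>M\<^esub>}"
proof
  show "span {} \<subseteq> {\<zero>\<^bsub>M\<^esub>}"
  proof
    fix x assume "x \<in> span {}" then show "x \<in> {\<zero>\<^bsub>M\<^esub>}" by induction auto
  qed
qed (simp add: ideal_smult.zero)

lemma span_insert:
  assumes "g \<in> carrier M" "G \<subseteq> carrier M" "x \<in> span (insert g G)"
  obtains v a where "v \<in> span G" "a \<in> carrier R" "x = v \<oplus>\<^bsub>M\<^esub> a \<odot>\<^bsub>M\<^esub> g"
proof -
  have "\<exists>v\<in>span G. \<exists>a\<in>carrier R. x = v \<oplus>\<^bsub>M\<^esub> a \<odot>\<^bsub>M\<^esub> g"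
    using assms(3)
  proof induction
    case zero
    then show ?case using assms(1) ideal_smult.zero[of M R "carrier R" G] by force
  next
    case (gen b s)
    show ?case
    proof (cases "s = g")
      case True
      then show ?thesis using gen assms(1) ideal_smult.zero[of M R "carrier R" G] by force
    next
      case False
      then have "b \<odot>\<^bsub>M\<^esub> s \<in> span G" using gen by (auto intro: ideal_smult.gen)
      moreover have "b \<odot>\<^bsub>M\<^esub> s = b \<odot>\<^bsub>M\<^esub> s \<oplus>\<^bsub>M\<^esub> \<zero> \<odot>\<^bsub>M\<^esub> g"
        using gen False assms by (auto simp: subsetD)
      ultimately show ?thesis by blast
    qed
  next
    case (add u w)
    then obtain v1 a1 v2 a2 where h: "v1 \<in> span G" "a1 \<in> carrier R" "u = v1 \<oplus>\<^bsub>M\<^esub> a1 \<odot>\<^bsub>M\<^esub> g"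
      "v2 \<in> span G" "a2 \<in> carrier R" "w = v2 \<oplus>\<^bsub>M\<^esub> a2 \<odot>\<^bsub>M\<^esub> g" by blast
    then have "u \<oplus>\<^bsub>M\<^esub> w = (v1 \<oplus>\<^bsub>M\<^esub> v2) \<oplus>\<^bsub>M\<^esub> (a1 \<oplus> a2) \<odot>\<^bsub>M\<^esub> g"
      using submodule_subset[OF span_submodule[OF assms(2)]] assms(1)
      by (simp add: smult_l_distr M.a_ac subsetD)
    then show ?case using h by (blast intro: ideal_smult.add)
  qed
  then show ?thesis using that by blast
qed

lemma finsum_smult_in_span:
  assumes "finite T" "T \<subseteq> S" "S \<subseteq> carrier M" "f \<in> S \<rightarrow> carrier R"
  shows "finsum M (\<lambda>s. f s \<odot>\<^bsub>M\<^esub> s) T \<in> span S"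
  using assms(1,2)
proof (induction T rule: finite_induct)
  case (insert t T)
  have "finsum M (\<lambda>s. f s \<odot>\<^bsub>M\<^esub> s) (insert t T)
      = f t \<odot>\<^bsub>M\<^esub> t \<oplus>\<^bsub>M\<^esub> finsum M (\<lambda>s. f s \<odot>\<^bsub>M\<^esub> s) T"
    using insert assms(3,4) by (intro M.finsum_insert) (auto simp: subsetD Pi_iff)
  moreover have "f t \<odot>\<^bsub>M\<^esub> t \<in> span S"
    using insert.prems assms(4) by (auto intro: ideal_smult.gen)
  ultimately show ?case using insert by (auto intro: ideal_smult.add)
qed (simp add: ideal_smult.zero)

definition finitely_generated :: "'c set \<Rightarrow> bool" where
  "finitely_generated N \<longleftrightarrow> (\<exists>S. finite S \<and> S \<subseteq> N \<and> N = span S)"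

lemma finitely_generated_carrier:
  assumes "fin_gen_module R M" shows "finitely_generated (carrier M)"
proof -
  obtain S where S: "finite S" "S \<subseteq> carrier M"
    "carrier M = {finsum M (\<lambda>s. f s \<odot>\<^bsub>M\<^esub> s) S | f. f \<in> S \<rightarrow> carrier R}"
    using assms unfolding fin_gen_module_def by blast
  then have "carrier M \<subseteq> span S" using finsum_smult_in_span[OF S(1) order_refl S(2)] by auto
  moreover have "span S \<subseteq> carrier M" by (rule span_least[OF carrier_is_submodule S(2)])
  ultimately show ?thesis unfolding finitely_generated_def using S(1,2) by blast
qed

definition coeff_ideal :: "'c set \<Rightarrow> 'c \<Rightarrow> 'c set \<Rightarrow> 'a set" where
  "coeff_ideal G g U = {a \<in> carrier R. \<exists>v\<in>span G. v \<oplus>\<^bsub>M\<^esub> a \<odot>\<^bsub>M\<^esub> g \<in> U}"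

lemma ideal_coeff_ideal:
  assumes g: "g \<in> carrier M" and G: "G \<subseteq> carrier M" and U: "submodule U R M"
  shows "ideal (coeff_ideal G g U) R"
  unfolding coeff_ideal_def
proof (rule R.idealI')
  have spanG: "span G \<subseteq> carrier M" using submodule_subset[OF span_submodule[OF G]] .
  show "\<zero> \<in> {a \<in> carrier R. \<exists>v\<in>span G. v \<oplus>\<^bsub>M\<^esub> a \<odot>\<^bsub>M\<^esub> g \<in> U}"
    using g submodule_zero[OF U] ideal_smult.zero[of M R "carrier R" G] by force
next
  have spanG: "span G \<subseteq> carrier M" using submodule_subset[OF span_submodule[OF G]] .
  fix a b assume "a \<in> {a \<in> carrier R. \<exists>v\<in>span G. v \<oplus>\<^bsub>M\<^esub> a \<odot>\<^bsub>M\<^esub> g \<in> U}"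
    "b \<in> {a \<in> carrier R. \<exists>v\<in>span G. v \<oplus>\<^bsub>M\<^esub> a \<odot>\<^bsub>M\<^esub> g \<in> U}"
  then obtain v w where h: "a \<in> carrier R" "b \<in> carrier R" "v \<in> span G" "w \<in> span G"
    "v \<oplus>\<^bsub>M\<^esub> a \<odot>\<^bsub>M\<^esub> g \<in> U" "w \<oplus>\<^bsub>M\<^esub> b \<odot>\<^bsub>M\<^esub> g \<in> U" by blast
  have "(v \<oplus>\<^bsub>M\<^esub> a \<odot>\<^bsub>M\<^esub> g) \<oplus>\<^bsub>M\<^esub> (w \<oplus>\<^bsub>M\<^esub> b \<odot>\<^bsub>M\<^esub> g) = (v \<oplus>\<^bsub>M\<^esub> w) \<oplus>\<^bsub>M\<^esub> (a \<oplus> b) \<odot>\<^bsub>M\<^esub> g"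
    using h spanG g by (simp add: smult_l_distr M.a_ac subsetD)
  then show "a \<oplus> b \<in> {a \<in> carrier R. \<exists>v\<in>span G. v \<oplus>\<^bsub>M\<^esub> a \<odot>\<^bsub>M\<^esub> g \<in> U}"
    using h submodule_add[OF U h(5,6)] ideal_smult.add[OF h(3,4)] by auto
next
  have spanG: "span G \<subseteq> carrier M" using submodule_subset[OF span_submodule[OF G]] .
  fix r a assume r: "r \<in> carrier R" and "a \<in> {a \<in> carrier R. \<exists>v\<in>span G. v \<oplus>\<^bsub>M\<^esub> a \<odot>\<^bsub>M\<^esub> g \<in> U}"
  then obtain v where h: "a \<in> carrier R" "v \<in> span G" "v \<oplus>\<^bsub>M\<^esub> a \<odot>\<^bsub>M\<^esub> g \<in> U" by blast
  have "r \<odot>\<^bsub>M\<^esub> (v \<oplus>\<^bsub>M\<^esub> a \<odot>\<^bsub>M\<^esub> g) = r \<odot>\<^bsub>M\<^esub> v \<oplus>\<^bsub>M\<^esub> (r \<otimes> a) \<odot>\<^bsub>M\<^esub> g"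
    using h spanG g r by (simp add: smult_r_distr smult_assoc1 subsetD)
  then show "r \<otimes> a \<in> {a \<in> carrier R. \<exists>v\<in>span G. v \<oplus>\<^bsub>M\<^esub> a \<odot>\<^bsub>M\<^esub> g \<in> U}"
    using h r submodule.smult_closed[OF U r h(3)]
      submodule.smult_closed[OF span_submodule[OF G] r h(2)] by auto
qed auto

lemma subset_submod_sum_if_coeff_ideal_subset:
  assumes g: "g \<in> carrier M" and G: "G \<subseteq> carrier M"
    and U: "submodule U R M" and U_sub: "U \<subseteq> span (insert g G)"
    and W: "W \<subseteq> U" and coeff: "coeff_ideal G g U \<subseteq> coeff_ideal G g W"
  shows "U \<subseteq> submod_sum M W (U \<inter> span G)"
proof
  fix x assume xU: "x \<in> U"
  then obtain v a where v: "v \<in> span G" and a: "a \<in> carrier R" and x: "x = v \<oplus>\<^bsub>M\<^esub> a \<odot>\<^bsub>M\<^esub> g"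
    using span_insert[OF g G] U_sub by blast
  then have "a \<in> coeff_ideal G g W" using coeff xU unfolding coeff_ideal_def by blast
  then obtain v' where v': "v' \<in> span G" and wW: "v' \<oplus>\<^bsub>M\<^esub> a \<odot>\<^bsub>M\<^esub> g \<in> W"
    unfolding coeff_ideal_def by blast
  define w where "w = v' \<oplus>\<^bsub>M\<^esub> a \<odot>\<^bsub>M\<^esub> g"
  have c: "x \<in> carrier M" "w \<in> carrier M" "v \<in> carrier M" "v' \<in> carrier M"
    using xU wW W v v' submodule_subset[OF U] submodule_subset[OF span_submodule[OF G]]
    unfolding w_def by auto
  have "x \<ominus>\<^bsub>M\<^esub> w = v \<ominus>\<^bsub>M\<^esub> v'"
    using a c g unfolding x w_def
    by (simp add: a_minus_def M.minus_add M.a_assoc M.a_lcomm[of "a \<odot>\<^bsub>M\<^esub> g" "\<ominus>\<^bsub>M\<^esub> v'"] M.r_neg)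
  moreover have "x \<ominus>\<^bsub>M\<^esub> w \<in> U"
    using submodule_diff[OF U xU] W wW unfolding w_def by blast
  ultimately have "x \<ominus>\<^bsub>M\<^esub> w \<in> U \<inter> span G"
    using submodule_diff[OF span_submodule[OF G] v v'] by simp
  moreover have "x = w \<oplus>\<^bsub>M\<^esub> (x \<ominus>\<^bsub>M\<^esub> w)"
    using c by (simp add: a_minus_def M.a_lcomm[of w x] M.r_neg)
  ultimately show "x \<in> submod_sum M W (U \<inter> span G)"
    using wW unfolding w_def by (metis submod_sumI)
qed

text \<open>Lifting generators of the coefficient ideal of g to U and adding generators of
  U \<inter> span G generates U.\<close>
lemma finitely_generated_submodule_insert:
  assumes noeth: "noetherian_ring R" and g: "g \<in> carrier M" and G: "G \<subseteq> carrier M"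
    and IH: "\<And>U. submodule U R M \<Longrightarrow> U \<subseteq> span G \<Longrightarrow> finitely_generated U"
    and U: "submodule U R M" and U_sub: "U \<subseteq> span (insert g G)"
  shows "finitely_generated U"
proof -
  have Uc: "U \<subseteq> carrier M" using submodule_subset[OF U] .
  obtain C where C: "C \<subseteq> carrier R" "finite C" "coeff_ideal G g U = Idl C"
    using noetherian_ring.finetely_gen[OF noeth ideal_coeff_ideal[OF g G U]] by blast
  have "\<forall>c\<in>C. \<exists>v\<in>span G. v \<oplus>\<^bsub>M\<^esub> c \<odot>\<^bsub>M\<^esub> g \<in> U"
    using C genideal_self[OF C(1)] unfolding coeff_ideal_def by auto
  then obtain lift where lift: "\<And>c. c \<in> C \<Longrightarrow> lift c \<in> span G \<and> lift c \<oplus>\<^bsub>M\<^esub> c \<odot>\<^bsub>M\<^esub> g \<in> U"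
    using bchoice[of C "\<lambda>c v. v \<in> span G \<and> v \<oplus>\<^bsub>M\<^esub> c \<odot>\<^bsub>M\<^esub> g \<in> U"] by blast
  define u where "u c = lift c \<oplus>\<^bsub>M\<^esub> c \<odot>\<^bsub>M\<^esub> g" for c
  have uU: "u ` C \<subseteq> U" using lift unfolding u_def by auto
  obtain D where D: "finite D" "D \<subseteq> U \<inter> span G" "U \<inter> span G = span D"
    using IH[OF submodule_Int[OF U span_submodule[OF G]]] unfolding finitely_generated_def by blast
  have "coeff_ideal G g U \<subseteq> coeff_ideal G g (span (u ` C))"
    unfolding C(3)
  proof (rule genideal_minimal)
    show "ideal (coeff_ideal G g (span (u ` C))) R"
      using uU Uc by (intro ideal_coeff_ideal g G span_submodule) auto
    show "C \<subseteq> coeff_ideal G g (span (u ` C))"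
    proof
      fix c assume "c \<in> C"
      then have "u c \<in> span (u ` C)" using uU Uc by (intro span_base) auto
      then show "c \<in> coeff_ideal G g (span (u ` C))"
        using lift \<open>c \<in> C\<close> C(1) unfolding coeff_ideal_def u_def by blast
    qed
  qed
  then have "U \<subseteq> submod_sum M (span (u ` C)) (span D)"
    using subset_submod_sum_if_coeff_ideal_subset[OF g G U U_sub span_least[OF U uU]] D(3) by simp
  also have "\<dots> \<subseteq> span (D \<union> u ` C)"
    using D(2) uU Uc span_mono[of "u ` C" "D \<union> u ` C"] span_mono[of D "D \<union> u ` C"]
    by (intro submod_sum_least span_submodule) auto
  finally have "U \<subseteq> span (D \<union> u ` C)" .
  moreover have "span (D \<union> u ` C) \<subseteq> U" using D uU by (intro span_least[OF U]) auto
  ultimately show ?thesis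
    unfolding finitely_generated_def using D uU C(2) by (intro exI[of _ "D \<union> u ` C"]) auto
qed

lemma finitely_generated_submodule:
  assumes noeth: "noetherian_ring R" and G: "finite G" "G \<subseteq> carrier M"
    and U: "submodule U R M" "U \<subseteq> span G"
  shows "finitely_generated U"
  using G U
proof (induction G arbitrary: U rule: finite_induct)
  case empty
  then have "U = span {}" using span_empty submodule_zero[OF empty(2)] by (auto simp: subset_singleton_iff)
  then show ?case unfolding finitely_generated_def by blast
next
  case (insert g G)
  then show ?case using finitely_generated_submodule_insert[OF noeth _ _ insert.IH] by blast
qed

definition noetherian_module :: bool where
  "noetherian_module \<longleftrightarrow> (\<forall>N :: nat \<Rightarrow> 'c set. (\<forall>j. submodule (N j) R M) \<longrightarrow> incseq N \<longrightarrow>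
     (\<exists>c. \<forall>j\<ge>c. N j = N c))"

lemma noetherian_moduleI:
  assumes noeth: "noetherian_ring R" and fg: "finitely_generated (carrier M)"
  shows noetherian_module
  unfolding noetherian_module_def
proof (intro allI impI)
  fix N :: "nat \<Rightarrow> 'c set" assume N: "\<forall>j. submodule (N j) R M" and mono: "incseq N"
  have UN: "submodule (\<Union>j. N j) R M" using N mono by (intro submodule_UN_incseq) auto
  obtain G where G: "finite G" "G \<subseteq> carrier M" "carrier M = span G"
    using fg unfolding finitely_generated_def by blast
  obtain S where S: "finite S" "S \<subseteq> (\<Union>j. N j)" "(\<Union>j. N j) = span S"
    using finitely_generated_submodule[OF noeth G(1,2) UN] G(3) submodule_subset[OF UN]
    unfolding finitely_generated_def by blast
  have "\<forall>s\<in>S. \<exists>j. s \<in> N j" using S by blast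
  then obtain js where js: "\<And>s. s \<in> S \<Longrightarrow> s \<in> N (js s)"
    using bchoice[of S "\<lambda>s j. s \<in> N j"] by blast
  define c where "c = Max (insert 0 (js ` S))"
  have "S \<subseteq> N c"
  proof
    fix s assume "s \<in> S"
    then have "js s \<le> c" unfolding c_def using S(1) by (intro Max_ge) auto
    then show "s \<in> N c" using js[OF \<open>s \<in> S\<close>] incseqD[OF mono] by blast
  qed
  then have "(\<Union>j. N j) \<subseteq> N c" using S(3) span_least N by simp
  then show "\<exists>c. \<forall>j\<ge>c. N j = N c" using incseqD[OF mono] by blast
qed

lemma noetherian_module_UN:
  assumes noetherian_module "\<And>j. submodule (N j) R M" "incseq N"
  obtains c where "(\<Union>j. N j) = N c"
proof -
  obtain c where c: "\<And>j. c \<le> j \<Longrightarrow> N j = N c"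
    using assms unfolding noetherian_module_def by blast
  have "N j \<subseteq> N c" for j
    using incseqD[OF assms(3), of j "max j c"] c[of "max j c"] by simp
  then show thesis by (intro that) blast
qed

section \<open>The Artin-Rees lemma modulo a submodule\<close>

text \<open>The chain of colon submodules (A + B) : a^j stabilises at some c, and an
  element a^c y of A + B is moved into a^(q-c) A + B by multiplying with a^(q-c).\<close>
lemma artin_rees_principal:
  assumes noeth: noetherian_module and a: "a \<in> carrier R"
    and A: "submodule A R M" and B: "submodule B R M"
  obtains c :: nat where "\<And>(q :: nat) y. c \<le> q \<Longrightarrow> y \<in> carrier M \<Longrightarrow> a [^] q \<odot>\<^bsub>M\<^esub> y \<in> submod_sum M A B \<Longrightarrow>
      a [^] q \<odot>\<^bsub>M\<^esub> y \<in> submod_sum M ((\<lambda>x. a [^] (q - c) \<odot>\<^bsub>M\<^esub> x) ` A) B"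
proof -
  define T where "T j = submod_colon M (submod_sum M A B) {a [^] j}" for j :: nat
  have T: "submodule (T j) R M" for j
    unfolding T_def using a by (intro submodule_submod_colon submodule_submod_sum A B) simp
  have "incseq T"
  proof (rule incseq_SucI)
    fix j show "T j \<subseteq> T (Suc j)"
    proof
      fix y assume y: "y \<in> T j"
      then have "a [^] Suc j \<odot>\<^bsub>M\<^esub> y = a \<odot>\<^bsub>M\<^esub> (a [^] j \<odot>\<^bsub>M\<^esub> y)"
        using a unfolding T_def submod_colon_def by (simp add: smult_assoc1[symmetric] R.m_comm[of _ a])
      then show "y \<in> T (Suc j)"
        using y a submodule.smult_closed[OF submodule_submod_sum[OF A B]]
        unfolding T_def submod_colon_def by simp
    qed
  qed
  then obtain c where c: "\<And>j. c \<le> j \<Longrightarrow> T j = T c"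
    using noeth T unfolding noetherian_module_def by blast
  show ?thesis
  proof (rule that)
    fix q y assume q: "c \<le> q" and y: "y \<in> carrier M" and "a [^] q \<odot>\<^bsub>M\<^esub> y \<in> submod_sum M A B"
    then have "y \<in> T c" using c[OF q] unfolding T_def submod_colon_def by auto
    then obtain x b where xb: "x \<in> A" "b \<in> B" "a [^] c \<odot>\<^bsub>M\<^esub> y = x \<oplus>\<^bsub>M\<^esub> b"
      unfolding T_def submod_colon_def by (auto elim: submod_sumE)
    have "a [^] q = a [^] (q - c) \<otimes> a [^] c" using q a by (simp add: R.nat_pow_mult)
    then have "a [^] q \<odot>\<^bsub>M\<^esub> y = a [^] (q - c) \<odot>\<^bsub>M\<^esub> (x \<oplus>\<^bsub>M\<^esub> b)"
      using a y xb(3) by (simp add: smult_assoc1)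
    also have "\<dots> = a [^] (q - c) \<odot>\<^bsub>M\<^esub> x \<oplus>\<^bsub>M\<^esub> a [^] (q - c) \<odot>\<^bsub>M\<^esub> b"
      using xb submodule_subset[OF A] submodule_subset[OF B] a by (simp add: smult_r_distr subsetD)
    finally show "a [^] q \<odot>\<^bsub>M\<^esub> y \<in> submod_sum M ((\<lambda>x. a [^] (q - c) \<odot>\<^bsub>M\<^esub> x) ` A) B"
      using xb a submodule.smult_closed[OF B] by (auto intro: submod_sumI)
  qed
qed

lemma ideal_pow_smult_add_principal:
  assumes J: "ideal J R" and a: "a \<in> carrier R"
  shows "ideal_smult R M (ideal_pow R (J <+> PIdl a) (p + q)) (carrier M)
    \<subseteq> submod_sum M (ideal_smult R M (ideal_pow R J p) (carrier M)) ((\<lambda>x. a [^] q \<odot>\<^bsub>M\<^esub> x) ` carrier M)"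
proof -
  have "ideal_smult R M (ideal_pow R (J <+> PIdl a) (p + q)) (carrier M)
      \<subseteq> ideal_smult R M (ideal_pow R J p <+> PIdl (a [^] q)) (carrier M)"
    using R.ideal_pow_add_principal[OF J a] by (rule ideal_smult_mono) simp
  also have "\<dots> \<subseteq> submod_sum M (ideal_smult R M (ideal_pow R J p) (carrier M))
                                (ideal_smult R M (PIdl (a [^] q)) (carrier M))"
    using J a by (intro ideal_smult_set_add R.ideal_pow_ideal R.cgenideal_ideal) simp_all
  also have "\<dots> \<subseteq> submod_sum M (ideal_smult R M (ideal_pow R J p) (carrier M)) ((\<lambda>x. a [^] q \<odot>\<^bsub>M\<^esub> x) ` carrier M)"
    using a by (intro submod_sum_mono ideal_smult_cgenideal) simp_all
  finally show ?thesis .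
qed

text \<open>Write z = j + a^(c+l) y + b with j in J^p M. Then a^(c+l) y lies in N + (J^p M + B),
  hence in a^l N + (J^p M + B) by the choice of c.\<close>
lemma add_principal_pow_decompose:
  assumes noeth: noetherian_module and J: "ideal J R" and a: "a \<in> carrier R"
    and B: "submodule B R M" and N: "submodule N R M"
  obtains c :: nat where "\<And>l z. z \<in> submod_sum M (ideal_smult R M (ideal_pow R (J <+> PIdl a) (p + (c + l))) (carrier M)) B \<inter> N
    \<Longrightarrow> \<exists>v\<in>N. \<exists>d\<in>submod_sum M (ideal_smult R M (ideal_pow R J p) (carrier M)) B. z = a [^] l \<odot>\<^bsub>M\<^esub> v \<oplus>\<^bsub>M\<^esub> d"
proof -
  let ?P = "submod_sum M (ideal_smult R M (ideal_pow R J p) (carrier M)) B"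
  have Jp: "submodule (ideal_smult R M (ideal_pow R J p) (carrier M)) R M"
    using J by (intro ideal_smult_submodule R.ideal_pow_ideal) simp_all
  have P: "submodule ?P R M" using Jp B by (rule submodule_submod_sum)
  obtain c :: nat where c: "\<And>(q :: nat) y. c \<le> q \<Longrightarrow> y \<in> carrier M \<Longrightarrow> a [^] q \<odot>\<^bsub>M\<^esub> y \<in> submod_sum M N ?P \<Longrightarrow>
      a [^] q \<odot>\<^bsub>M\<^esub> y \<in> submod_sum M ((\<lambda>x. a [^] (q - c) \<odot>\<^bsub>M\<^esub> x) ` N) ?P"
    using artin_rees_principal[OF noeth a N P] by metis
  show thesis
  proof (rule that)
    fix l z assume "z \<in> submod_sum M (ideal_smult R M (ideal_pow R (J <+> PIdl a) (p + (c + l))) (carrier M)) B \<inter> N"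
    then have zN: "z \<in> N" and "z \<in> submod_sum M (ideal_smult R M (ideal_pow R (J <+> PIdl a) (p + (c + l))) (carrier M)) B"
      by auto
    from this(2) obtain u b where u: "u \<in> ideal_smult R M (ideal_pow R (J <+> PIdl a) (p + (c + l))) (carrier M)"
      and b: "b \<in> B" and z: "z = u \<oplus>\<^bsub>M\<^esub> b" by (rule submod_sumE)
    from u have "u \<in> submod_sum M (ideal_smult R M (ideal_pow R J p) (carrier M)) ((\<lambda>x. a [^] (c + l) \<odot>\<^bsub>M\<^esub> x) ` carrier M)"
      using ideal_pow_smult_add_principal[OF J a] by blast
    then obtain j y where j: "j \<in> ideal_smult R M (ideal_pow R J p) (carrier M)" and y: "y \<in> carrier M"
      and u_eq: "u = j \<oplus>\<^bsub>M\<^esub> a [^] (c + l) \<odot>\<^bsub>M\<^esub> y" by (auto elim: submod_sumE)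
    have cM: "j \<in> carrier M" "b \<in> carrier M" "a [^] (c + l) \<odot>\<^bsub>M\<^esub> y \<in> carrier M"
      using j b y submodule_subset[OF B] submodule_subset[OF Jp] a by auto
    have jb: "j \<oplus>\<^bsub>M\<^esub> b \<in> ?P" using j b by (rule submod_sumI)
    have z': "z = a [^] (c + l) \<odot>\<^bsub>M\<^esub> y \<oplus>\<^bsub>M\<^esub> (j \<oplus>\<^bsub>M\<^esub> b)"
      unfolding z u_eq using cM by (simp add: M.a_ac)
    then have "a [^] (c + l) \<odot>\<^bsub>M\<^esub> y \<in> submod_sum M N ?P"
      using submod_sum_add_cancel[OF P jb cM(3)] zN by simp
    then have "a [^] (c + l) \<odot>\<^bsub>M\<^esub> y \<in> submod_sum M ((\<lambda>x. a [^] l \<odot>\<^bsub>M\<^esub> x) ` N) ?P"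
      using c[of "c + l" y] y by simp
    then obtain v w where v: "v \<in> N" and w: "w \<in> ?P"
      and vw: "a [^] (c + l) \<odot>\<^bsub>M\<^esub> y = a [^] l \<odot>\<^bsub>M\<^esub> v \<oplus>\<^bsub>M\<^esub> w" by (auto elim: submod_sumE)
    have "a [^] l \<odot>\<^bsub>M\<^esub> v \<in> carrier M" "w \<in> carrier M"
      using v w a submodule_subset[OF N] submodule_subset[OF P] by auto
    then have "z = a [^] l \<odot>\<^bsub>M\<^esub> v \<oplus>\<^bsub>M\<^esub> (w \<oplus>\<^bsub>M\<^esub> (j \<oplus>\<^bsub>M\<^esub> b))"
      unfolding z' vw using cM by (simp add: M.a_assoc)
    then show "\<exists>v\<in>N. \<exists>d\<in>?P. z = a [^] l \<odot>\<^bsub>M\<^esub> v \<oplus>\<^bsub>M\<^esub> d"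
      using v submodule_add[OF P w jb] by blast
  qed
qed

lemma artin_rees_add_principal:
  assumes noeth: noetherian_module and J: "ideal J R" and a: "a \<in> carrier R"
    and B: "submodule B R M" and N: "submodule N R M"
    and hyp: "submod_sum M (ideal_smult R M (ideal_pow R J p) (carrier M)) B \<inter> N
      \<subseteq> submod_sum M (ideal_smult R M (ideal_pow R J l) N) B"
  shows "\<exists>n. submod_sum M (ideal_smult R M (ideal_pow R (J <+> PIdl a) n) (carrier M)) B \<inter> N
      \<subseteq> submod_sum M (ideal_smult R M (ideal_pow R (J <+> PIdl a) l) N) B"
proof -
  let ?I = "J <+> PIdl a"
  have I: "ideal ?I R" using J a by (intro R.add_ideals R.cgenideal_ideal)
  have IlN: "submodule (ideal_smult R M (ideal_pow R ?I l) N) R M"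
    using I submodule_subset[OF N] by (intro ideal_smult_submodule R.ideal_pow_ideal)
  have JlN: "ideal_smult R M (ideal_pow R J l) N \<subseteq> ideal_smult R M (ideal_pow R ?I l) N"
    using ideal_smult_mono[OF R.ideal_pow_mono[OF R.set_add_upper(1)[OF J R.cgenideal_ideal[OF a]]]]
    by blast
  have "a \<in> ?I" using R.set_add_upper(2)[OF J R.cgenideal_ideal[OF a]] R.cgenideal_self[OF a] by blast
  then have "a [^] l \<in> ideal_pow R ?I l"
    using ideal.Icarr[OF I] by (intro R.nat_pow_in_ideal_pow) auto
  then have alN: "a [^] l \<odot>\<^bsub>M\<^esub> v \<in> ideal_smult R M (ideal_pow R ?I l) N" if "v \<in> N" for v
    using that by (rule ideal_smult.gen)
  obtain c where c: "\<And>z. z \<in> submod_sum M (ideal_smult R M (ideal_pow R ?I (p + (c + l))) (carrier M)) B \<inter> N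
    \<Longrightarrow> \<exists>v\<in>N. \<exists>d\<in>submod_sum M (ideal_smult R M (ideal_pow R J p) (carrier M)) B. z = a [^] l \<odot>\<^bsub>M\<^esub> v \<oplus>\<^bsub>M\<^esub> d"
    using add_principal_pow_decompose[OF noeth J a B N] by metis
  have "submod_sum M (ideal_smult R M (ideal_pow R ?I (p + (c + l))) (carrier M)) B \<inter> N
      \<subseteq> submod_sum M (ideal_smult R M (ideal_pow R ?I l) N) B"
  proof
    fix z assume z: "z \<in> submod_sum M (ideal_smult R M (ideal_pow R ?I (p + (c + l))) (carrier M)) B \<inter> N"
    then obtain v d where v: "v \<in> N" and dP: "d \<in> submod_sum M (ideal_smult R M (ideal_pow R J p) (carrier M)) B"
      and zd: "z = a [^] l \<odot>\<^bsub>M\<^esub> v \<oplus>\<^bsub>M\<^esub> d" using c by blast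
    have alv: "a [^] l \<odot>\<^bsub>M\<^esub> v \<in> N" using v a by (simp add: submodule.smult_closed[OF N])
    have "d \<in> N"
      using submodule_add_cancel[OF N alv] zd z dP
        submodule_subset[OF submodule_submod_sum[OF ideal_smult_submodule[OF R.ideal_pow_ideal[OF J]] B]]
      by blast
    then obtain t b where t: "t \<in> ideal_smult R M (ideal_pow R J l) N" and b: "b \<in> B"
      and d: "d = t \<oplus>\<^bsub>M\<^esub> b" using hyp dP by (blast elim: submod_sumE)
    have "a [^] l \<odot>\<^bsub>M\<^esub> v \<in> carrier M" "t \<in> carrier M" "b \<in> carrier M"
      using alv t b JlN submodule_subset[OF N] submodule_subset[OF B] submodule_subset[OF IlN] by blast+
    then have "z = (a [^] l \<odot>\<^bsub>M\<^esub> v \<oplus>\<^bsub>M\<^esub> t) \<oplus>\<^bsub>M\<^esub> b" unfolding zd d by (simp add: M.a_assoc)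
    then show "z \<in> submod_sum M (ideal_smult R M (ideal_pow R ?I l) N) B"
      using submodule_add[OF IlN alN[OF v]] JlN t b by (auto intro: submod_sumI)
  qed
  then show ?thesis by blast
qed

lemma artin_rees_mod:
  assumes noeth: noetherian_module and S: "finite S" "S \<subseteq> carrier R"
    and B: "submodule B R M" and N: "submodule N R M"
  shows "\<exists>n. submod_sum M (ideal_smult R M (ideal_pow R (Idl S) n) (carrier M)) B \<inter> N
      \<subseteq> submod_sum M (ideal_smult R M (ideal_pow R (Idl S) l) N) B"
  using S
proof (induction S rule: finite_induct)
  case empty
  have "ideal_pow R (Idl {}) (Suc l) \<subseteq> {\<zero>}"
    using R.ideal_prod_inter[OF R.genideal_ideal R.ideal_pow_ideal[OF R.genideal_ideal], of "{}" "{}" l]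
      R.genideal_minimal[OF R.zeroideal, of "{}"] by auto
  then have "ideal_smult R M (ideal_pow R (Idl {}) (Suc l)) (carrier M) \<subseteq> ideal_smult R M (ideal_pow R (Idl {}) l) N"
  proof (intro ideal_smult_least ideal_smult_submodule R.ideal_pow_ideal R.genideal_ideal)
    fix b x assume "ideal_pow R (Idl {}) (Suc l) \<subseteq> {\<zero>}" "b \<in> ideal_pow R (Idl {}) (Suc l)" "x \<in> carrier M"
    then show "b \<odot>\<^bsub>M\<^esub> x \<in> ideal_smult R M (ideal_pow R (Idl {}) l) N"
      using ideal_smult.zero by (metis singletonD smult_l_null subsetD)
  qed (use submodule_subset[OF N] in auto)
  then show ?case by (intro exI[of _ "Suc l"]) (auto dest: submod_sum_mono[OF _ order_refl])
next
  case (insert a S)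
  then show ?case
    using artin_rees_add_principal[OF noeth R.genideal_ideal _ B N] R.Idl_insert by auto
qed

section \<open>The submodule H^0_m(M)\<close>

lemma H0_eq_UN: "H0 R M m = (\<Union>n. submod_colon M {\<zero>\<^bsub>M\<^esub>} (ideal_pow R m n))"
  unfolding H0_def submod_colon_def by auto

lemma incseq_submod_colon_pow:
  "ideal m R \<Longrightarrow> incseq (\<lambda>n. submod_colon M N (ideal_pow R m n))"
  using R.ideal_pow_antimono unfolding submod_colon_def by (intro monoI) blast

lemma H0_submodule: "ideal m R \<Longrightarrow> submodule (H0 R M m) R M"
  unfolding H0_eq_UN
  by (intro submodule_UN_incseq incseq_submod_colon_pow submodule_submod_colon zero_submodule
      R.ideal_pow_subset_carrier)


lemma H0_eq_submod_colon:
  assumes noetherian_module "ideal m R"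
  obtains s where "H0 R M m = submod_colon M {\<zero>\<^bsub>M\<^esub>} (ideal_pow R m s)"
proof -
  have "submodule (submod_colon M {\<zero>\<^bsub>M\<^esub>} (ideal_pow R m n)) R M" for n
    using assms(2) by (intro submodule_submod_colon zero_submodule R.ideal_pow_subset_carrier)
  then show thesis
    using noetherian_module_UN[OF assms(1) _ incseq_submod_colon_pow[OF assms(2)]] that
    unfolding H0_eq_UN by blast
qed

lemma H0_submod_colon:
  assumes noetherian_module and m: "ideal m R"
  shows "submod_colon M (H0 R M m) (ideal_pow R m k) = H0 R M m"
proof
  obtain s where s: "H0 R M m = submod_colon M {\<zero>\<^bsub>M\<^esub>} (ideal_pow R m s)"
    using H0_eq_submod_colon[OF assms] .
  have "submod_colon M (H0 R M m) (ideal_pow R m k)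
      \<subseteq> submod_colon M {\<zero>\<^bsub>M\<^esub>} (ideal_prod R (ideal_pow R m k) (ideal_pow R m s))"
    unfolding s by (intro submod_colon_colon zero_submodule R.ideal_pow_ideal m)
  also have "\<dots> = submod_colon M {\<zero>\<^bsub>M\<^esub>} (ideal_pow R m (k + s))"
    by (simp add: R.ideal_pow_add[OF m])
  also have "\<dots> \<subseteq> H0 R M m"
    unfolding H0_eq_UN by (rule UN_upper) simp
  finally show "submod_colon M (H0 R M m) (ideal_pow R m k) \<subseteq> H0 R M m" .
  show "H0 R M m \<subseteq> submod_colon M (H0 R M m) (ideal_pow R m k)"
  proof
    fix x assume "x \<in> H0 R M m"
    then show "x \<in> submod_colon M (H0 R M m) (ideal_pow R m k)"
      using submodule.smult_closed[OF H0_submodule[OF m]] R.ideal_pow_subset_carrier[OF m]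
        submodule_subset[OF H0_submodule[OF m]]
      unfolding submod_colon_def by (auto simp: subsetD)
  qed
qed

end

section \<open>The module M^r\<close>

text \<open>The module M^r, realised as the functions on nat that vanish from r on; the
  multiplicative fields of the record are unused.\<close>
definition pow_module :: "('a, 'c, 'd) module_scheme \<Rightarrow> nat \<Rightarrow> ('a, nat \<Rightarrow> 'c) module" where
  "pow_module M r = \<lparr>carrier = {f. (\<forall>i<r. f i \<in> carrier M) \<and> (\<forall>i\<ge>r. f i = \<zero>\<^bsub>M\<^esub>)},
     monoid.mult = (\<lambda>f g. f), monoid.one = (\<lambda>i. \<zero>\<^bsub>M\<^esub>), ring.zero = (\<lambda>i. \<zero>\<^bsub>M\<^esub>),
     ring.add = (\<lambda>f g i. f i \<oplus>\<^bsub>M\<^esub> g i), module.smult = (\<lambda>a f i. a \<odot>\<^bsub>M\<^esub> f i)\<rparr>"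

lemma pow_module_simps:
  "carrier (pow_module M r) = {f. (\<forall>i<r. f i \<in> carrier M) \<and> (\<forall>i\<ge>r. f i = \<zero>\<^bsub>M\<^esub>)}"
  "\<zero>\<^bsub>pow_module M r\<^esub> = (\<lambda>i. \<zero>\<^bsub>M\<^esub>)"
  "f \<oplus>\<^bsub>pow_module M r\<^esub> g = (\<lambda>i. f i \<oplus>\<^bsub>M\<^esub> g i)"
  "a \<odot>\<^bsub>pow_module M r\<^esub> f = (\<lambda>i. a \<odot>\<^bsub>M\<^esub> f i)"
  unfolding pow_module_def by simp_all

context module
begin

lemma pow_module_carrierD: "f \<in> carrier (pow_module M r) \<Longrightarrow> f i \<in> carrier M"
  by (cases "i < r") (auto simp: pow_module_simps)

lemma module_pow_module: "module R (pow_module M r)"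
proof (rule moduleI)
  show "cring R" by (rule is_cring)
  show "abelian_group (pow_module M r)"
  proof (rule abelian_groupI)
    fix x y z assume x: "x \<in> carrier (pow_module M r)" and y: "y \<in> carrier (pow_module M r)"
      and z: "z \<in> carrier (pow_module M r)"
    show "x \<oplus>\<^bsub>pow_module M r\<^esub> y \<oplus>\<^bsub>pow_module M r\<^esub> z
        = x \<oplus>\<^bsub>pow_module M r\<^esub> (y \<oplus>\<^bsub>pow_module M r\<^esub> z)"
      using pow_module_carrierD[OF x] pow_module_carrierD[OF y] pow_module_carrierD[OF z]
      by (simp add: pow_module_simps M.a_assoc)
    show "x \<oplus>\<^bsub>pow_module M r\<^esub> y = y \<oplus>\<^bsub>pow_module M r\<^esub> x"
      using pow_module_carrierD[OF x] pow_module_carrierD[OF y]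
      by (simp add: pow_module_simps M.a_comm)
    show "\<zero>\<^bsub>pow_module M r\<^esub> \<oplus>\<^bsub>pow_module M r\<^esub> x = x"
      using pow_module_carrierD[OF x] by (simp add: pow_module_simps)
    have "(\<lambda>i. \<ominus>\<^bsub>M\<^esub> x i) \<in> carrier (pow_module M r)"
      "(\<lambda>i. \<ominus>\<^bsub>M\<^esub> x i) \<oplus>\<^bsub>pow_module M r\<^esub> x = \<zero>\<^bsub>pow_module M r\<^esub>"
      using x pow_module_carrierD[OF x] by (auto simp: pow_module_simps M.l_neg)
    then show "\<exists>y\<in>carrier (pow_module M r). y \<oplus>\<^bsub>pow_module M r\<^esub> x = \<zero>\<^bsub>pow_module M r\<^esub>" by blast
  qed (auto simp: pow_module_simps)
next
  fix a b x y assume a: "a \<in> carrier R" and b: "b \<in> carrier R"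
    and x: "x \<in> carrier (pow_module M r)" and y: "y \<in> carrier (pow_module M r)"
  show "(a \<oplus> b) \<odot>\<^bsub>pow_module M r\<^esub> x = a \<odot>\<^bsub>pow_module M r\<^esub> x \<oplus>\<^bsub>pow_module M r\<^esub> b \<odot>\<^bsub>pow_module M r\<^esub> x"
    "(a \<otimes> b) \<odot>\<^bsub>pow_module M r\<^esub> x = a \<odot>\<^bsub>pow_module M r\<^esub> (b \<odot>\<^bsub>pow_module M r\<^esub> x)"
    "a \<odot>\<^bsub>pow_module M r\<^esub> (x \<oplus>\<^bsub>pow_module M r\<^esub> y)
      = a \<odot>\<^bsub>pow_module M r\<^esub> x \<oplus>\<^bsub>pow_module M r\<^esub> a \<odot>\<^bsub>pow_module M r\<^esub> y"
    using a b pow_module_carrierD[OF x] pow_module_carrierD[OF y]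
    by (simp_all add: pow_module_simps smult_l_distr smult_r_distr smult_assoc1)
next
  fix x assume x: "x \<in> carrier (pow_module M r)"
  show "\<one> \<odot>\<^bsub>pow_module M r\<^esub> x = x"
    using pow_module_carrierD[OF x] by (simp add: pow_module_simps)
qed (auto simp: pow_module_simps)

definition unit_tuple :: "nat \<Rightarrow> 'c \<Rightarrow> nat \<Rightarrow> 'c" where
  "unit_tuple i x = (\<lambda>j. if j = i then x else \<zero>\<^bsub>M\<^esub>)"

lemma unit_tuple_in_ideal_smult:
  assumes I: "ideal I R" and i: "i < r" and x: "x \<in> ideal_smult R M I Y"
  shows "unit_tuple i x \<in> ideal_smult R (pow_module M r) I {unit_tuple j y | j y. j < r \<and> y \<in> Y}"
  using x
proof induction
  case zero
  have "unit_tuple i \<zero>\<^bsub>M\<^esub> = \<zero>\<^bsub>pow_module M r\<^esub>" by (simp add: unit_tuple_def pow_module_simps fun_eq_iff)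
  then show ?case by (simp add: ideal_smult.zero)
next
  case (gen a y)
  then have "unit_tuple i (a \<odot>\<^bsub>M\<^esub> y) = a \<odot>\<^bsub>pow_module M r\<^esub> unit_tuple i y"
    using ideal.Icarr[OF I] by (simp add: unit_tuple_def pow_module_simps fun_eq_iff)
  then show ?case using gen i by (auto intro: ideal_smult.gen)
next
  case (add u v)
  have "unit_tuple i (u \<oplus>\<^bsub>M\<^esub> v) = unit_tuple i u \<oplus>\<^bsub>pow_module M r\<^esub> unit_tuple i v"
    by (simp add: unit_tuple_def pow_module_simps fun_eq_iff)
  then show ?case using add by (simp add: ideal_smult.add)
qed

lemma pow_module_in_ideal_smult:
  assumes I: "ideal I R" and f: "f \<in> carrier (pow_module M r)"
    and fi: "\<And>i. i < r \<Longrightarrow> f i \<in> ideal_smult R M I Y"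
  shows "f \<in> ideal_smult R (pow_module M r) I {unit_tuple j y | j y. j < r \<and> y \<in> Y}"
proof -
  define trunc where "trunc t = (\<lambda>j. if j < t then f j else \<zero>\<^bsub>M\<^esub>)" for t
  have "trunc t \<in> ideal_smult R (pow_module M r) I {unit_tuple j y | j y. j < r \<and> y \<in> Y}" if "t \<le> r" for t
    using that
  proof (induction t)
    case 0
    have "trunc 0 = \<zero>\<^bsub>pow_module M r\<^esub>" by (simp add: trunc_def pow_module_simps)
    then show ?case by (simp add: ideal_smult.zero)
  next
    case (Suc t)
    have "trunc (Suc t) = trunc t \<oplus>\<^bsub>pow_module M r\<^esub> unit_tuple t (f t)"
      using f Suc.prems by (auto simp: trunc_def unit_tuple_def pow_module_simps fun_eq_iff)
    moreover have "unit_tuple t (f t) \<in> ideal_smult R (pow_module M r) I {unit_tuple j y | j y. j < r \<and> y \<in> Y}"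
      using Suc.prems fi[of t] by (intro unit_tuple_in_ideal_smult[OF I]) auto
    ultimately show ?case using Suc by (simp add: ideal_smult.add)
  qed
  moreover have "trunc r = f" using f by (auto simp: trunc_def pow_module_simps fun_eq_iff)
  ultimately show ?thesis by blast
qed

lemma finitely_generated_pow_module:
  assumes "finitely_generated (carrier M)"
  shows "module.finitely_generated R (pow_module M r) (carrier (pow_module M r))"
proof -
  interpret F: module R "pow_module M r" by (rule module_pow_module)
  obtain G where G: "finite G" "G \<subseteq> carrier M" "carrier M = span G"
    using assms unfolding finitely_generated_def by blast
  let ?E = "{unit_tuple j y | j y. j < r \<and> y \<in> G}"
  have E: "?E \<subseteq> carrier (pow_module M r)"
    using G(2) by (auto simp: unit_tuple_def pow_module_simps)
  have "carrier (pow_module M r) \<subseteq> F.span ?E"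
    using G(3) by (auto intro: pow_module_in_ideal_smult[OF oneideal] simp: pow_module_simps)
  moreover have "F.span ?E \<subseteq> carrier (pow_module M r)"
    using E by (rule F.span_least[OF F.carrier_is_submodule])
  moreover have "finite ?E"
    using G(1) finite_image_set2[of "\<lambda>j. j < r" "\<lambda>y. y \<in> G" unit_tuple] by simp
  ultimately show ?thesis unfolding F.finitely_generated_def using E by blast
qed

definition pow_submodule :: "nat \<Rightarrow> 'c set \<Rightarrow> (nat \<Rightarrow> 'c) set" where
  "pow_submodule r H = {f \<in> carrier (pow_module M r). \<forall>i<r. f i \<in> H}"

lemma submodule_pow_submodule:
  assumes H: "submodule H R M" shows "submodule (pow_submodule r H) R (pow_module M r)"
proof -
  interpret F: module R "pow_module M r" by (rule module_pow_module)
  show ?thesis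
    unfolding pow_submodule_def
    by (rule F.submoduleI')
       (auto simp: pow_module_simps intro: submodule_zero[OF H] submodule_add[OF H]
         submodule.smult_closed[OF H])
qed

lemma pow_module_in_submod_sum:
  assumes I: "ideal I R" and H: "submodule H R M" and f: "f \<in> carrier (pow_module M r)"
    and fi: "\<And>i. i < r \<Longrightarrow> f i \<in> submod_sum M (ideal_smult R M I (carrier M)) H"
  shows "f \<in> submod_sum (pow_module M r)
    (ideal_smult R (pow_module M r) I (carrier (pow_module M r))) (pow_submodule r H)"
proof -
  interpret F: module R "pow_module M r" by (rule module_pow_module)
  have "\<forall>i. \<exists>p. i < r \<longrightarrow> fst p \<in> ideal_smult R M I (carrier M) \<and> snd p \<in> H \<and> f i = fst p \<oplus>\<^bsub>M\<^esub> snd p"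
    using fi unfolding submod_sum_def by force
  then obtain p where p: "\<And>i. i < r \<Longrightarrow> fst (p i) \<in> ideal_smult R M I (carrier M) \<and> snd (p i) \<in> H
      \<and> f i = fst (p i) \<oplus>\<^bsub>M\<^esub> snd (p i)"
    using choice[of "\<lambda>i p. i < r \<longrightarrow> fst p \<in> ideal_smult R M I (carrier M) \<and> snd p \<in> H
      \<and> f i = fst p \<oplus>\<^bsub>M\<^esub> snd p"] by blast
  define g where "g i = fst (p i)" for i
  define h where "h i = snd (p i)" for i
  have gh: "\<And>i. i < r \<Longrightarrow> g i \<in> ideal_smult R M I (carrier M) \<and> h i \<in> H \<and> f i = g i \<oplus>\<^bsub>M\<^esub> h i"
    using p unfolding g_def h_def by blast
  define g' where "g' i = (if i < r then g i else \<zero>\<^bsub>M\<^esub>)" for i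
  define h' where "h' i = (if i < r then h i else \<zero>\<^bsub>M\<^esub>)" for i
  have IM: "ideal_smult R M I (carrier M) \<subseteq> carrier M"
    using ideal.Icarr[OF I] by (intro ideal_smult_subset_carrier) auto
  have g': "g' \<in> carrier (pow_module M r)" and h': "h' \<in> pow_submodule r H"
    using gh IM submodule_subset[OF H] submodule_zero[OF H]
    by (auto simp: g'_def h'_def pow_submodule_def pow_module_simps)
  have "g' \<in> ideal_smult R (pow_module M r) I {unit_tuple j y | j y. j < r \<and> y \<in> carrier M}"
    using gh by (intro pow_module_in_ideal_smult[OF I g']) (simp add: g'_def)
  moreover have "{unit_tuple j y | j y. j < r \<and> y \<in> carrier M} \<subseteq> carrier (pow_module M r)"
    by (auto simp: unit_tuple_def pow_module_simps)
  ultimately have "g' \<in> ideal_smult R (pow_module M r) I (carrier (pow_module M r))"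
    using F.ideal_smult_mono[OF order_refl] by blast
  moreover have "f = g' \<oplus>\<^bsub>pow_module M r\<^esub> h'"
    using f gh by (auto simp: g'_def h'_def pow_module_simps fun_eq_iff)
  ultimately show ?thesis using h' by (simp add: F.submod_sumI)
qed

lemma nth_carrier [simp]: "set bs \<subseteq> carrier R \<Longrightarrow> i < length bs \<Longrightarrow> bs ! i \<in> carrier R"
  using nth_mem by blast

definition smult_tuple :: "'a list \<Rightarrow> 'c \<Rightarrow> nat \<Rightarrow> 'c" where
  "smult_tuple bs x = (\<lambda>i. if i < length bs then bs ! i \<odot>\<^bsub>M\<^esub> x else \<zero>\<^bsub>M\<^esub>)"

lemma smult_tuple_carrier:
  "set bs \<subseteq> carrier R \<Longrightarrow> x \<in> carrier M \<Longrightarrow> smult_tuple bs x \<in> carrier (pow_module M (length bs))"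
  by (auto simp: smult_tuple_def pow_module_simps)

lemma smult_tuple_add:
  "set bs \<subseteq> carrier R \<Longrightarrow> x \<in> carrier M \<Longrightarrow> y \<in> carrier M \<Longrightarrow>
   smult_tuple bs (x \<oplus>\<^bsub>M\<^esub> y) = smult_tuple bs x \<oplus>\<^bsub>pow_module M (length bs)\<^esub> smult_tuple bs y"
  by (auto simp: smult_tuple_def pow_module_simps fun_eq_iff smult_r_distr)

lemma smult_tuple_smult:
  assumes "set bs \<subseteq> carrier R" "a \<in> carrier R" "x \<in> carrier M"
  shows "smult_tuple bs (a \<odot>\<^bsub>M\<^esub> x) = a \<odot>\<^bsub>pow_module M (length bs)\<^esub> smult_tuple bs x"
proof -
  have "bs ! i \<odot>\<^bsub>M\<^esub> (a \<odot>\<^bsub>M\<^esub> x) = a \<odot>\<^bsub>M\<^esub> (bs ! i \<odot>\<^bsub>M\<^esub> x)" if "i < length bs" for i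
    using assms nth_mem[OF that] by (auto simp: smult_assoc1[symmetric] R.m_comm)
  then show ?thesis using assms(2) by (auto simp: smult_tuple_def pow_module_simps fun_eq_iff)
qed

lemma smult_tuple_image_submodule:
  assumes bs: "set bs \<subseteq> carrier R" and N: "submodule N R M"
  shows "submodule (smult_tuple bs ` N) R (pow_module M (length bs))"
proof -
  interpret F: module R "pow_module M (length bs)" by (rule module_pow_module)
  have Nc: "N \<subseteq> carrier M" by (rule submodule_subset[OF N])
  show ?thesis
  proof (rule F.submoduleI')
    show "smult_tuple bs ` N \<subseteq> carrier (pow_module M (length bs))"
      using smult_tuple_carrier[OF bs] Nc by auto
    have "smult_tuple bs \<zero>\<^bsub>M\<^esub> = \<zero>\<^bsub>pow_module M (length bs)\<^esub>"
      using bs by (auto simp: smult_tuple_def pow_module_simps fun_eq_iff)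
    then show "\<zero>\<^bsub>pow_module M (length bs)\<^esub> \<in> smult_tuple bs ` N"
      using submodule_zero[OF N] by (metis image_eqI)
  next
    fix u v assume "u \<in> smult_tuple bs ` N" "v \<in> smult_tuple bs ` N"
    then obtain x y where "x \<in> N" "y \<in> N" "u = smult_tuple bs x" "v = smult_tuple bs y" by blast
    then have "u \<oplus>\<^bsub>pow_module M (length bs)\<^esub> v = smult_tuple bs (x \<oplus>\<^bsub>M\<^esub> y)" "x \<oplus>\<^bsub>M\<^esub> y \<in> N"
      using smult_tuple_add[OF bs] Nc submodule_add[OF N] by (auto simp: subsetD)
    then show "u \<oplus>\<^bsub>pow_module M (length bs)\<^esub> v \<in> smult_tuple bs ` N" by simp
  next
    fix a u assume a: "a \<in> carrier R" and "u \<in> smult_tuple bs ` N"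
    then obtain x where "x \<in> N" "u = smult_tuple bs x" by blast
    then have "a \<odot>\<^bsub>pow_module M (length bs)\<^esub> u = smult_tuple bs (a \<odot>\<^bsub>M\<^esub> x)" "a \<odot>\<^bsub>M\<^esub> x \<in> N"
      using a smult_tuple_smult[OF bs] Nc submodule.smult_closed[OF N] by (auto simp: subsetD)
    then show "a \<odot>\<^bsub>pow_module M (length bs)\<^esub> u \<in> smult_tuple bs ` N" by simp
  qed
qed

lemma ideal_smult_smult_tuple_image:
  assumes bs: "set bs \<subseteq> carrier R" and I: "ideal I R" and Q: "Q \<subseteq> carrier M"
  shows "ideal_smult R (pow_module M (length bs)) I (smult_tuple bs ` Q)
    \<subseteq> smult_tuple bs ` ideal_smult R M I Q"
proof -
  interpret F: module R "pow_module M (length bs)" by (rule module_pow_module)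
  show ?thesis
  proof (rule F.ideal_smult_least)
    show "submodule (smult_tuple bs ` ideal_smult R M I Q) R (pow_module M (length bs))"
      using I Q by (intro smult_tuple_image_submodule[OF bs] ideal_smult_submodule)
    fix a u assume a: "a \<in> I" and "u \<in> smult_tuple bs ` Q"
    then obtain x where x: "x \<in> Q" "u = smult_tuple bs x" by blast
    then have "a \<odot>\<^bsub>pow_module M (length bs)\<^esub> u = smult_tuple bs (a \<odot>\<^bsub>M\<^esub> x)"
      using a smult_tuple_smult[OF bs] ideal.Icarr[OF I] Q by (auto simp: subsetD)
    moreover have "a \<odot>\<^bsub>M\<^esub> x \<in> ideal_smult R M I Q" using a x(1) by (rule ideal_smult.gen)
    ultimately show "a \<odot>\<^bsub>pow_module M (length bs)\<^esub> u \<in> smult_tuple bs ` ideal_smult R M I Q" by simp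
  qed
qed

lemma ideal_smult_smult_tuple_image_sum:
  assumes bs: "set bs \<subseteq> carrier R" and I: "ideal I R" and H: "submodule H R M"
  shows "submod_sum (pow_module M (length bs))
      (ideal_smult R (pow_module M (length bs)) I
        (submod_sum (pow_module M (length bs)) (smult_tuple bs ` carrier M) (pow_submodule (length bs) H)))
      (pow_submodule (length bs) H)
    \<subseteq> submod_sum (pow_module M (length bs)) (smult_tuple bs ` ideal_smult R M I (carrier M))
      (pow_submodule (length bs) H)"
proof -
  let ?F = "pow_module M (length bs)" and ?\<phi> = "smult_tuple bs" and ?B = "pow_submodule (length bs) H"
  interpret F: module R ?F by (rule module_pow_module)
  have B: "submodule ?B R ?F" using H by (rule submodule_pow_submodule)
  have IM: "submodule (?\<phi> ` ideal_smult R M I (carrier M)) R ?F"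
    using I by (intro smult_tuple_image_submodule[OF bs] ideal_smult_submodule) simp_all
  have "ideal_smult R ?F I (submod_sum ?F (?\<phi> ` carrier M) ?B)
      \<subseteq> submod_sum ?F (ideal_smult R ?F I (?\<phi> ` carrier M)) (ideal_smult R ?F I ?B)"
    using I smult_tuple_image_submodule[OF bs carrier_is_submodule] B by (rule F.ideal_smult_submod_sum)
  also have "\<dots> \<subseteq> submod_sum ?F (?\<phi> ` ideal_smult R M I (carrier M)) ?B"
    using ideal_smult_smult_tuple_image[OF bs I] F.ideal_smult_subset[OF B] ideal.Icarr[OF I]
    by (intro F.submod_sum_mono) auto
  finally show ?thesis
    using F.submod_sum_upper[OF IM B]
    by (intro F.submod_sum_least F.submodule_submod_sum IM B) auto
qed

lemma smult_tuple_diff_in_submod_colon: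
  assumes bs: "set bs \<subseteq> carrier R" and H: "submodule H R M" and x: "x \<in> carrier M" and y: "y \<in> carrier M"
    and h: "h \<in> pow_submodule (length bs) H"
    and eq: "smult_tuple bs x = smult_tuple bs y \<oplus>\<^bsub>pow_module M (length bs)\<^esub> h"
  shows "x \<ominus>\<^bsub>M\<^esub> y \<in> submod_colon M H (set bs)"
proof -
  have "s \<odot>\<^bsub>M\<^esub> (x \<ominus>\<^bsub>M\<^esub> y) \<in> H" if "s \<in> set bs" for s
  proof -
    obtain i where i: "i < length bs" "s = bs ! i" using \<open>s \<in> set bs\<close> by (auto simp: in_set_conv_nth)
    have s: "s \<in> carrier R" using bs that by blast
    have hi: "h i \<in> H" "h i \<in> carrier M"
      using h i(1) submodule_subset[OF H] unfolding pow_submodule_def by auto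
    have "s \<odot>\<^bsub>M\<^esub> x = s \<odot>\<^bsub>M\<^esub> y \<oplus>\<^bsub>M\<^esub> h i"
      using fun_cong[OF eq, of i] i by (simp add: smult_tuple_def pow_module_simps)
    then have "s \<odot>\<^bsub>M\<^esub> (x \<ominus>\<^bsub>M\<^esub> y) = h i"
      using s x y hi(2)
      by (simp add: a_minus_def smult_r_distr smult_r_minus M.a_assoc
          M.a_lcomm[of "s \<odot>\<^bsub>M\<^esub> y" "h i"] M.r_neg)
    then show ?thesis using hi(1) by simp
  qed
  then show ?thesis unfolding submod_colon_def using x y by auto
qed

lemma smult_tuple_artin_rees:
  assumes noeth: "noetherian_ring R" and fg: "finitely_generated (carrier M)"
    and m: "ideal m R" and H: "submodule H R M" and bs: "set bs \<subseteq> carrier R"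
  obtains n where "\<And>x. x \<in> submod_colon M (submod_sum M (ideal_smult R M (ideal_pow R m n) (carrier M)) H) (set bs)
    \<Longrightarrow> \<exists>y\<in>ideal_smult R M (ideal_pow R m l) (carrier M). x \<ominus>\<^bsub>M\<^esub> y \<in> submod_colon M H (set bs)"
proof -
  let ?F = "pow_module M (length bs)" and ?\<phi> = "smult_tuple bs" and ?B = "pow_submodule (length bs) H"
  interpret F: module R ?F by (rule module_pow_module)
  define N where "N = submod_sum ?F (?\<phi> ` carrier M) ?B"
  have B: "submodule ?B R ?F" using H by (rule submodule_pow_submodule)
  have \<phi>M: "submodule (?\<phi> ` carrier M) R ?F" using bs carrier_is_submodule by (rule smult_tuple_image_submodule)
  have N: "submodule N R ?F" unfolding N_def using \<phi>M B by (rule F.submodule_submod_sum)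
  obtain Sm where Sm: "Sm \<subseteq> carrier R" "finite Sm" "m = Idl Sm"
    using noetherian_ring.finetely_gen[OF noeth m] by blast
  obtain n where n: "submod_sum ?F (ideal_smult R ?F (ideal_pow R m n) (carrier ?F)) ?B \<inter> N
      \<subseteq> submod_sum ?F (ideal_smult R ?F (ideal_pow R m l) N) ?B"
    using F.artin_rees_mod[OF F.noetherian_moduleI[OF noeth finitely_generated_pow_module[OF fg]]
        Sm(2,1) B N] Sm(3) by blast
  show thesis
  proof (rule that)
    fix x assume "x \<in> submod_colon M (submod_sum M (ideal_smult R M (ideal_pow R m n) (carrier M)) H) (set bs)"
    then have x: "x \<in> carrier M"
      and bx: "\<And>i. i < length bs \<Longrightarrow> bs ! i \<odot>\<^bsub>M\<^esub> x \<in> submod_sum M (ideal_smult R M (ideal_pow R m n) (carrier M)) H"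
      unfolding submod_colon_def by auto
    have "?\<phi> x \<in> submod_sum ?F (ideal_smult R ?F (ideal_pow R m n) (carrier ?F)) ?B"
      using bx smult_tuple_carrier[OF bs x]
      by (intro pow_module_in_submod_sum[OF R.ideal_pow_ideal[OF m] H]) (auto simp: smult_tuple_def)
    moreover have "?\<phi> x \<in> N"
      unfolding N_def using F.submod_sum_upper(1)[OF \<phi>M B] x by blast
    ultimately have "?\<phi> x \<in> submod_sum ?F (?\<phi> ` ideal_smult R M (ideal_pow R m l) (carrier M)) ?B"
      using n ideal_smult_smult_tuple_image_sum[OF bs R.ideal_pow_ideal[OF m] H]
      unfolding N_def by blast
    then obtain y h where y: "y \<in> ideal_smult R M (ideal_pow R m l) (carrier M)" and h: "h \<in> ?B"
      and \<phi>x: "?\<phi> x = ?\<phi> y \<oplus>\<^bsub>?F\<^esub> h" by (auto elim: F.submod_sumE)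
    have "y \<in> carrier M"
      using y ideal_smult_subset_carrier[OF R.ideal_pow_subset_carrier[OF m] order_refl] by blast
    then show "\<exists>y\<in>ideal_smult R M (ideal_pow R m l) (carrier M). x \<ominus>\<^bsub>M\<^esub> y \<in> submod_colon M H (set bs)"
      using smult_tuple_diff_in_submod_colon[OF bs H x _ h \<phi>x] y by blast
  qed
qed

lemma submod_colon_pow_subset_mod_H0:
  assumes noeth: "noetherian_ring R" and m: "ideal m R" and fg: "fin_gen_module R M"
  shows "\<exists>n3 > l.
    submod_colon M (submod_sum M (ideal_smult R M (ideal_pow R m n3) (carrier M)) (H0 R M m))
                   (ideal_pow R m k)
    \<subseteq> submod_sum M (ideal_smult R M (ideal_pow R m l) (carrier M)) (H0 R M m)"
proof -
  have fgM: "finitely_generated (carrier M)" using fg by (rule finitely_generated_carrier)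
  have H: "submodule (H0 R M m) R M" using m by (rule H0_submodule)
  obtain S where S: "S \<subseteq> carrier R" "finite S" "ideal_pow R m k = Idl S"
    using noetherian_ring.finetely_gen[OF noeth R.ideal_pow_ideal[OF m]] by blast
  obtain bs where bs: "set bs = S" using finite_list[OF S(2)] by blast
  obtain n where n: "\<And>x. x \<in> submod_colon M (submod_sum M (ideal_smult R M (ideal_pow R m n) (carrier M)) (H0 R M m)) (set bs)
    \<Longrightarrow> \<exists>y\<in>ideal_smult R M (ideal_pow R m l) (carrier M). x \<ominus>\<^bsub>M\<^esub> y \<in> submod_colon M (H0 R M m) (set bs)"
    using smult_tuple_artin_rees[OF noeth fgM m H] bs S(1) by blast
  have colon_H0: "submod_colon M (H0 R M m) (set bs) = H0 R M m"
    using submod_colon_genideal[OF H S(1)] H0_submod_colon[OF noetherian_moduleI[OF noeth fgM] m, of k]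
    unfolding S(3) bs by simp
  have "submod_colon M (submod_sum M (ideal_smult R M (ideal_pow R m (max n (Suc l))) (carrier M)) (H0 R M m))
                 (ideal_pow R m k)
    \<subseteq> submod_colon M (submod_sum M (ideal_smult R M (ideal_pow R m n) (carrier M)) (H0 R M m)) (set bs)"
    using R.genideal_self[OF S(1)] S(3) bs R.ideal_pow_antimono[OF m, of n "max n (Suc l)"]
    by (intro submod_colon_mono submod_sum_mono ideal_smult_mono) auto
  also have "\<dots> \<subseteq> submod_sum M (ideal_smult R M (ideal_pow R m l) (carrier M)) (H0 R M m)"
  proof
    fix x assume x: "x \<in> submod_colon M (submod_sum M (ideal_smult R M (ideal_pow R m n) (carrier M)) (H0 R M m)) (set bs)"
    then obtain y where y: "y \<in> ideal_smult R M (ideal_pow R m l) (carrier M)" and "x \<ominus>\<^bsub>M\<^esub> y \<in> H0 R M m"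
      using n colon_H0 by blast
    moreover have "x \<in> carrier M" "y \<in> carrier M"
      using x y ideal_smult_subset_carrier[OF R.ideal_pow_subset_carrier[OF m] order_refl]
      unfolding submod_colon_def by auto
    then have "x = y \<oplus>\<^bsub>M\<^esub> (x \<ominus>\<^bsub>M\<^esub> y)" by (simp add: a_minus_def M.a_lcomm[of y x] M.r_neg)
    ultimately show "x \<in> submod_sum M (ideal_smult R M (ideal_pow R m l) (carrier M)) (H0 R M m)"
      by (metis submod_sumI)
  qed
  finally show ?thesis by (intro exI[of _ "max n (Suc l)"]) auto
qed

end

theorem lemma2p3:
  fixes R :: "('a, 'b) ring_scheme" and M :: "('a, 'c, 'e) module_scheme"
    and m :: "'a set" and d k l :: nat
  assumes "noetherian_ring R" and "local_ring R m"
    and "module R M" and "fin_gen_module R M"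
    and "module_dim R M = enat d" and "d \<ge> 1"
    and "k > 0" and "l > 0"
  shows "\<exists>n3 > l.
    submod_colon M (submod_sum M (ideal_smult R M (ideal_pow R m n3) (carrier M)) (H0 R M m))
                   (ideal_pow R m k)
    \<subseteq> submod_sum M (ideal_smult R M (ideal_pow R m l) (carrier M)) (H0 R M m)"
proof -
  have "ideal m R"
    using assms(2) unfolding local_ring_def maximalideal_def by blast
  then show ?thesis using module.submod_colon_pow_subset_mod_H0[OF assms(3,1) _ assms(4)] by blast
qed

end
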